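(* Let $\lambda\geq\mu\geq 1$, $K\geq 0$, let $\gamma\in C^\infty(\mathbb{S}^1)$ be a smooth $2\pi$-periodic function with zero mean, and let $\mathcal{Q}\in C^\infty(\overline\Omega,\mathrm{Sym}_n)$ satisfy $\|\mathcal{Q}\|_k\leq K\mu^k$ for all $k\geq 0$. Then for any fixed $j\geq 0$ and each $i=1,\dots,n$ there exist $w^j\in C^\infty(\overline\Omega,\mathbb{R}^n)$, $\mathcal{G}^j,\mathcal{R}^j\in C^\infty(\overline\Omega,\mathrm{Sym}_n)$ and $\gamma^j\in C^\infty(\mathbb{S}^1)$ with zero mean such that $$\gamma(\lambda x\cdot\xi_i)\,\mathcal{Q}=2\,\mathrm{sym}(\nabla w^j)+\gamma^j(\lambda x\cdot\xi_i)\,(\mu\lambda^{-1})^j\,\mathcal{G}^j+\mathcal{R}^j,$$ where $\mathcal{R}^j(x)\in\mathrm{span}\{\xi_l\otimes\xi_l:l=n+1,\dots,n_*\}$ for every $x$, and for all $k\geq0$ $$\|w^j\|_k\leq CK\lambda^{k-1},\qquad \|\mathcal{G}^j\|_k\leq CK\mu^k,\qquad \|\mathcal{R}^j\|_k\leq CK\lambda^k,$$ with $C$ depending only on $n$ and $\gamma$ (and on $j,k$).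
   Context: $\Omega\subset\mathbb{R}^n$ bounded domain, $n\ge2$, $n_*=n(n+1)/2$, $\mathrm{Sym}_n$ symmetric $n\times n$ matrices, $\mathrm{sym}(A)=\frac12(A+A^t)$. $\{\xi_l\}_{l=1}^{n_*}=\{(e_i+e_j)/|e_i+e_j|:1\le i\le j\le n\}$ with $\xi_l=e_l$ for $l\le n$. Norms: $\|f\|_k=\sum_{m\le k}\sum_{|\beta|=m}\sup_\Omega|\nabla^\beta f|$. *)

theory Defs
  imports "HOL-Analysis.Analysis" "HOL-Library.Multiset"
begin

definition partial :: "'n::finite \<Rightarrow> (real^'n \<Rightarrow> 'b::real_normed_vector) \<Rightarrow> real^'n \<Rightarrow> 'b" where
  "partial i f x = vector_derivative (\<lambda>t. f (x + t *\<^sub>R axis i 1)) (at 0)"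

fun dpar :: "'n::finite list \<Rightarrow> (real^'n \<Rightarrow> 'b::real_normed_vector) \<Rightarrow> real^'n \<Rightarrow> 'b" where
  "dpar [] f = f"
| "dpar (i # is) f = partial i (dpar is f)"

text \<open>Derivative nabla^beta for a multi-index beta, represented as a multiset of directions.\<close>
definition dmulti :: "'n::finite multiset \<Rightarrow> (real^'n \<Rightarrow> 'b::real_normed_vector) \<Rightarrow> real^'n \<Rightarrow> 'b" where
  "dmulti \<beta> f = dpar (SOME ds. mset ds = \<beta>) f"

definition smooth_on :: "(real^'n::finite) set \<Rightarrow> (real^'n \<Rightarrow> 'b::real_normed_vector) \<Rightarrow> bool" where
  "smooth_on \<Omega> f \<longleftrightarrow>
     (\<forall>ds. continuous_on \<Omega> (dpar ds f) \<and>
        (\<forall>i. \<forall>x\<in>\<Omega>. (\<lambda>t. dpar ds f (x + t *\<^sub>R axis i 1)) differentiable (at 0)))"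

definition smooth_closure :: "(real^'n::finite) set \<Rightarrow> (real^'n \<Rightarrow> 'b::real_normed_vector) \<Rightarrow> bool" where
  "smooth_closure \<Omega> f \<longleftrightarrow> smooth_on \<Omega> f \<and> continuous_on (closure \<Omega>) f \<and>
     (\<forall>ds. \<exists>g. continuous_on (closure \<Omega>) g \<and> (\<forall>x\<in>\<Omega>. g x = dpar ds f x))"

definition Ck_norm :: "(real^'n::finite) set \<Rightarrow> nat \<Rightarrow> (real^'n \<Rightarrow> 'b::real_normed_vector) \<Rightarrow> real" where
  "Ck_norm \<Omega> k f = (\<Sum>m\<le>k. \<Sum>\<beta>\<in>{\<beta>::'n multiset. size \<beta> = m}. (SUP x\<in>\<Omega>. norm (dmulti \<beta> f x)))"

definition is_sym :: "real^'n^'n \<Rightarrow> bool" where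
  "is_sym A \<longleftrightarrow> transpose A = A"

definition symm :: "real^'n^'n \<Rightarrow> real^'n^'n" where
  "symm A = (1/2) *\<^sub>R (A + transpose A)"

definition grad :: "(real^'n::finite \<Rightarrow> real^'n) \<Rightarrow> real^'n \<Rightarrow> real^'n^'n" where
  "grad w x = (\<chi> p q. partial q (\<lambda>y. w y $ p) x)"

definition outer :: "real^'n \<Rightarrow> real^'n \<Rightarrow> real^'n^'n" where
  "outer u v = (\<chi> p q. u $ p * v $ q)"

text \<open>The directions xi_l for l > n: (e_a + e_b)/|e_a + e_b| with a \<noteq> b.\<close>
definition xi_pair :: "'n::finite \<Rightarrow> 'n \<Rightarrow> real^'n" where
  "xi_pair a b = (1 / norm (axis a (1::real) + axis b 1)) *\<^sub>R (axis a 1 + axis b 1)"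

definition offdiag_span :: "(real^'n::finite^'n) set" where
  "offdiag_span = span {outer (xi_pair a b) (xi_pair a b) | a b. a \<noteq> b}"

definition smooth_periodic :: "(real \<Rightarrow> real) \<Rightarrow> bool" where
  "smooth_periodic g \<longleftrightarrow> (\<forall>x. g (x + 2*pi) = g x) \<and> (\<forall>k x. ((deriv ^^ k) g) differentiable (at x))"

definition zero_mean :: "(real \<Rightarrow> real) \<Rightarrow> bool" where
  "zero_mean g \<longleftrightarrow> integral {0..2*pi} g = 0"

end

(* Write e_i for the oscillation direction.  Let v = correction i Q be the vector for which
   Q - (v \<otimes> e_i + e_i \<otimes> v) has every diagonal entry equal to the sum of the off-diagonal
   entries of its row, so that it lies in span{\<xi>_l \<otimes> \<xi>_l : l > n}, and let \<Phi> be the zero-mean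
   periodic antiderivative of \<gamma>.  Then w = \<lambda>\<^sup>-\<^sup>1 \<Phi>(\<lambda> x_i) v satisfies
     \<gamma>(\<lambda> x_i) Q = 2 sym \<nabla>w + \<Phi>(\<lambda> x_i) (\<mu>/\<lambda>) G + \<gamma>(\<lambda> x_i) (Q - v \<otimes> e_i - e_i \<otimes> v),
   G = -(2/\<mu>) sym \<nabla>v.  Since G again has k-th derivatives of size K \<mu>^k, repeating the step
   j times, with \<Phi> in place of \<gamma>, produces the factor (\<mu>/\<lambda>)^j.  The derivative bounds follow
   from the Leibniz rule, each derivative falling on an oscillating factor costing a factor \<lambda>. *)

theory Submission
  imports Defs
begin

lemma dpar_append [simp]: "dpar (xs @ ys) f = dpar xs (dpar ys f)"
  by (induction xs) auto

definition partial_differentiable ::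
    "'n::finite \<Rightarrow> (real^'n \<Rightarrow> 'b::real_normed_vector) \<Rightarrow> real^'n \<Rightarrow> bool" where
  "partial_differentiable i f x \<longleftrightarrow> (\<lambda>t. f (x + t *\<^sub>R axis i 1)) differentiable (at 0)"

lemma has_vector_derivative_partial:
  "partial_differentiable i f x \<Longrightarrow>
     ((\<lambda>t. f (x + t *\<^sub>R axis i 1)) has_vector_derivative partial i f x) (at 0)"
  unfolding partial_differentiable_def partial_def by (simp add: vector_derivative_works[symmetric])

lemma partial_eqI:
  "((\<lambda>t. f (x + t *\<^sub>R axis i 1)) has_vector_derivative D) (at 0) \<Longrightarrow> partial i f x = D"
  unfolding partial_def by (rule vector_derivative_at)

lemma partial_differentiableI:
  "((\<lambda>t. f (x + t *\<^sub>R axis i 1)) has_vector_derivative D) (at 0) \<Longrightarrow> partial_differentiable i f x"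
  unfolding partial_differentiable_def by (rule differentiableI_vector)

lemma eventually_axis_line_eq:
  fixes x :: "real^'n::finite"
  assumes "open \<Omega>" "x \<in> \<Omega>" "\<forall>y\<in>\<Omega>. f y = g y"
  shows "eventually (\<lambda>t. t \<in> UNIV \<longrightarrow> f (x + t *\<^sub>R axis i 1) = g (x + t *\<^sub>R axis i 1)) (nhds 0)"
proof -
  have "((\<lambda>t. x + t *\<^sub>R axis i 1) \<longlongrightarrow> x) (nhds (0::real))"
    by (auto intro!: tendsto_eq_intros filterlim_ident)
  then have "eventually (\<lambda>t. x + t *\<^sub>R axis i 1 \<in> \<Omega>) (nhds 0)"
    using assms(1,2) by (rule topological_tendstoD)
  then show ?thesis
    by eventually_elim (use assms(3) in auto)
qed

lemma partial_cong:
  assumes "open \<Omega>" "x \<in> \<Omega>" "\<forall>y\<in>\<Omega>. f y = g y"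
  shows "partial i f x = partial i g x"
  unfolding partial_def by (rule vector_derivative_cong_eq[OF eventually_axis_line_eq[OF assms]]) auto

lemma partial_differentiable_cong:
  assumes "open \<Omega>" "x \<in> \<Omega>" "\<forall>y\<in>\<Omega>. f y = g y" "partial_differentiable i f x"
  shows "partial_differentiable i g x"
proof -
  have "((\<lambda>t. f (x + t *\<^sub>R axis i 1)) has_vector_derivative partial i f x) (at 0)"
    using assms(4) by (rule has_vector_derivative_partial)
  then have "((\<lambda>t. g (x + t *\<^sub>R axis i 1)) has_vector_derivative partial i f x) (at 0)"
    using has_vector_derivative_cong_ev[OF eventually_axis_line_eq[OF assms(1-3)]] assms(2,3) by simp
  then show ?thesis by (rule partial_differentiableI)
qed

lemma dpar_cong:
  assumes "open \<Omega>" "x \<in> \<Omega>" "\<forall>y\<in>\<Omega>. f y = g y"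
  shows "dpar ds f x = dpar ds g x"
  using assms(2)
proof (induction ds arbitrary: x)
  case Nil
  then show ?case using assms(3) by simp
next
  case (Cons d ds)
  then show ?case using partial_cong[OF assms(1) Cons.prems, of "dpar ds f" "dpar ds g"] by simp
qed

lemma partial_add:
  assumes "partial_differentiable i f x" "partial_differentiable i g x"
  shows "partial i (\<lambda>y. f y + g y) x = partial i f x + partial i g x"
    and "partial_differentiable i (\<lambda>y. f y + g y) x"
proof -
  have "((\<lambda>t. f (x + t *\<^sub>R axis i 1) + g (x + t *\<^sub>R axis i 1)) has_vector_derivative
      partial i f x + partial i g x) (at 0)"
    by (intro has_vector_derivative_add has_vector_derivative_partial assms)
  then show "partial i (\<lambda>y. f y + g y) x = partial i f x + partial i g x"
    and "partial_differentiable i (\<lambda>y. f y + g y) x"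
    by (auto intro: partial_eqI partial_differentiableI)
qed

lemma partial_linear:
  assumes "bounded_linear L" "partial_differentiable i f x"
  shows "partial i (\<lambda>y. L (f y)) x = L (partial i f x)"
    and "partial_differentiable i (\<lambda>y. L (f y)) x"
proof -
  have "((\<lambda>t. L (f (x + t *\<^sub>R axis i 1))) has_vector_derivative L (partial i f x)) (at 0)"
    by (intro bounded_linear.has_vector_derivative[OF assms(1)] has_vector_derivative_partial assms)
  then show "partial i (\<lambda>y. L (f y)) x = L (partial i f x)"
    and "partial_differentiable i (\<lambda>y. L (f y)) x"
    by (auto intro: partial_eqI partial_differentiableI)
qed

lemma partial_const: "partial i (\<lambda>y. c) x = 0" "partial_differentiable i (\<lambda>y. c) x"
proof -
  have "((\<lambda>t. c) has_vector_derivative 0) (at 0)" by simp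
  then show "partial i (\<lambda>y. c) x = 0" "partial_differentiable i (\<lambda>y. c) x"
    by (rule partial_eqI, rule partial_differentiableI)
qed

lemma partial_scaleR:
  fixes \<phi> :: "real^'n::finite \<Rightarrow> real"
  assumes "partial_differentiable i \<phi> x" "partial_differentiable i g x"
  shows "partial i (\<lambda>y. \<phi> y *\<^sub>R g y) x = partial i \<phi> x *\<^sub>R g x + \<phi> x *\<^sub>R partial i g x"
    and "partial_differentiable i (\<lambda>y. \<phi> y *\<^sub>R g y) x"
proof -
  have "((\<lambda>t. \<phi> (x + t *\<^sub>R axis i 1)) has_field_derivative partial i \<phi> x) (at 0)"
    using has_vector_derivative_partial[OF assms(1)]
    by (simp add: has_real_derivative_iff_has_vector_derivative)
  from has_vector_derivative_scaleR[OF this has_vector_derivative_partial[OF assms(2)]]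
  have "((\<lambda>t. \<phi> (x + t *\<^sub>R axis i 1) *\<^sub>R g (x + t *\<^sub>R axis i 1)) has_vector_derivative
      partial i \<phi> x *\<^sub>R g x + \<phi> x *\<^sub>R partial i g x) (at 0)"
    by (simp add: add.commute)
  then show "partial i (\<lambda>y. \<phi> y *\<^sub>R g y) x = partial i \<phi> x *\<^sub>R g x + \<phi> x *\<^sub>R partial i g x"
    and "partial_differentiable i (\<lambda>y. \<phi> y *\<^sub>R g y) x"
    by (auto intro: partial_eqI partial_differentiableI)
qed

lemma dpar_const: "dpar ds (\<lambda>y. c) = (\<lambda>y. if ds = [] then c else 0)"
  by (induction ds) (auto simp: partial_const)

lemma smooth_on_iff:
  "smooth_on \<Omega> f \<longleftrightarrow>
     (\<forall>ds. continuous_on \<Omega> (dpar ds f) \<and> (\<forall>i. \<forall>x\<in>\<Omega>. partial_differentiable i (dpar ds f) x))"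
  unfolding smooth_on_def partial_differentiable_def by simp

lemma smooth_on_continuous_on_dpar: "smooth_on \<Omega> f \<Longrightarrow> continuous_on \<Omega> (dpar ds f)"
  unfolding smooth_on_iff by blast

lemma smooth_on_partial_differentiable_dpar:
  "smooth_on \<Omega> f \<Longrightarrow> x \<in> \<Omega> \<Longrightarrow> partial_differentiable i (dpar ds f) x"
  unfolding smooth_on_iff by blast

lemma smooth_on_continuous_on: "smooth_on \<Omega> f \<Longrightarrow> continuous_on \<Omega> f"
  using smooth_on_continuous_on_dpar[where ds = "[]"] by simp

lemma smooth_on_partial_differentiable:
  "smooth_on \<Omega> f \<Longrightarrow> x \<in> \<Omega> \<Longrightarrow> partial_differentiable i f x"
  using smooth_on_partial_differentiable_dpar[where ds = "[]"] by simp

lemma smooth_on_dpar: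
  assumes "smooth_on \<Omega> f"
  shows "smooth_on \<Omega> (dpar es f)"
  unfolding smooth_on_iff
proof (intro allI conjI ballI)
  fix ds i x
  show "continuous_on \<Omega> (dpar ds (dpar es f))"
    using smooth_on_continuous_on_dpar[OF assms, of "ds @ es"] by simp
  assume "x \<in> \<Omega>"
  then show "partial_differentiable i (dpar ds (dpar es f)) x"
    using smooth_on_partial_differentiable_dpar[OF assms, of x i "ds @ es"] by simp
qed

lemma smooth_on_partial: "smooth_on \<Omega> f \<Longrightarrow> smooth_on \<Omega> (partial d f)"
  using smooth_on_dpar[where es = "[d]"] by simp

lemma smooth_on_cong:
  assumes "open \<Omega>" "\<forall>y\<in>\<Omega>. f y = g y" "smooth_on \<Omega> f"
  shows "smooth_on \<Omega> g"
  unfolding smooth_on_iff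
proof (intro allI conjI ballI)
  fix ds
  have eq: "\<forall>y\<in>\<Omega>. dpar ds f y = dpar ds g y"
    using dpar_cong[OF assms(1) _ assms(2)] by blast
  show "continuous_on \<Omega> (dpar ds g)"
    by (rule continuous_on_eq[OF smooth_on_continuous_on_dpar[OF assms(3)] eq[rule_format]])
  fix i x assume x: "x \<in> \<Omega>"
  show "partial_differentiable i (dpar ds g) x"
    by (rule partial_differentiable_cong[OF assms(1) x eq
          smooth_on_partial_differentiable_dpar[OF assms(3) x]])
qed

lemma smooth_on_const: "smooth_on \<Omega> (\<lambda>y. c)"
  unfolding smooth_on_iff by (simp add: dpar_const partial_const)

lemma dpar_add_if_partial_differentiable:
  assumes "open \<Omega>" "x \<in> \<Omega>"
    and "\<And>es i y. length es < length ds \<Longrightarrow> y \<in> \<Omega> \<Longrightarrow>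
           partial_differentiable i (dpar es f) y \<and> partial_differentiable i (dpar es g) y"
  shows "dpar ds (\<lambda>y. f y + g y) x = dpar ds f x + dpar ds g x"
  using assms(2,3)
proof (induction ds arbitrary: x)
  case Nil
  then show ?case by simp
next
  case (Cons d ds)
  have "\<forall>y\<in>\<Omega>. dpar ds (\<lambda>y. f y + g y) y = dpar ds f y + dpar ds g y"
    using Cons by force
  then have "dpar (d # ds) (\<lambda>y. f y + g y) x = partial d (\<lambda>y. dpar ds f y + dpar ds g y) x"
    using partial_cong[OF assms(1) Cons.prems(1)] by simp
  also have "\<dots> = dpar (d # ds) f x + dpar (d # ds) g x"
    using partial_add(1)[of d "dpar ds f" x "dpar ds g"] Cons.prems by auto
  finally show ?case .
qed

lemma dpar_add:
  assumes "open \<Omega>" "smooth_on \<Omega> f" "smooth_on \<Omega> g" "x \<in> \<Omega>"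
  shows "dpar ds (\<lambda>y. f y + g y) x = dpar ds f x + dpar ds g x"
  using assms by (intro dpar_add_if_partial_differentiable) (auto intro: smooth_on_partial_differentiable_dpar)

lemma smooth_on_add:
  assumes "open \<Omega>" "smooth_on \<Omega> f" "smooth_on \<Omega> g"
  shows "smooth_on \<Omega> (\<lambda>y. f y + g y)"
  unfolding smooth_on_iff
proof (intro allI conjI ballI)
  fix ds
  have eq: "\<forall>y\<in>\<Omega>. dpar ds f y + dpar ds g y = dpar ds (\<lambda>y. f y + g y) y"
    using dpar_add[OF assms] by simp
  have "continuous_on \<Omega> (\<lambda>y. dpar ds f y + dpar ds g y)"
    using assms by (intro continuous_on_add smooth_on_continuous_on_dpar)
  then show "continuous_on \<Omega> (dpar ds (\<lambda>y. f y + g y))"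
    by (rule continuous_on_eq[OF _ eq[rule_format]])
  fix i x assume x: "x \<in> \<Omega>"
  show "partial_differentiable i (dpar ds (\<lambda>y. f y + g y)) x"
    by (rule partial_differentiable_cong[OF assms(1) x eq partial_add(2)])
      (use assms x in \<open>auto intro: smooth_on_partial_differentiable_dpar\<close>)
qed

lemma dpar_linear:
  assumes "open \<Omega>" "bounded_linear L" "smooth_on \<Omega> f" "x \<in> \<Omega>"
  shows "dpar ds (\<lambda>y. L (f y)) x = L (dpar ds f x)"
  using assms(4)
proof (induction ds arbitrary: x)
  case Nil
  then show ?case by simp
next
  case (Cons d ds)
  have "dpar (d # ds) (\<lambda>y. L (f y)) x = partial d (\<lambda>y. L (dpar ds f y)) x"
    using partial_cong[OF assms(1) Cons.prems, of "dpar ds (\<lambda>y. L (f y))" "\<lambda>y. L (dpar ds f y)" d]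
      Cons.IH by simp
  also have "\<dots> = L (dpar (d # ds) f x)"
    using partial_linear(1)[OF assms(2) smooth_on_partial_differentiable_dpar[OF assms(3) Cons.prems]]
    by simp
  finally show ?case .
qed

lemma smooth_on_linear:
  assumes "open \<Omega>" "bounded_linear L" "smooth_on \<Omega> f"
  shows "smooth_on \<Omega> (\<lambda>y. L (f y))"
  unfolding smooth_on_iff
proof (intro allI conjI ballI)
  fix ds
  have eq: "\<forall>y\<in>\<Omega>. L (dpar ds f y) = dpar ds (\<lambda>y. L (f y)) y"
    using dpar_linear[OF assms] by simp
  have "continuous_on \<Omega> (\<lambda>y. L (dpar ds f y))"
    using linear_continuous_on[OF assms(2)] smooth_on_continuous_on_dpar[OF assms(3)]
    by (rule continuous_on_compose2) auto
  then show "continuous_on \<Omega> (dpar ds (\<lambda>y. L (f y)))"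
    by (rule continuous_on_eq[OF _ eq[rule_format]])
  fix i x assume x: "x \<in> \<Omega>"
  show "partial_differentiable i (dpar ds (\<lambda>y. L (f y))) x"
    by (rule partial_differentiable_cong[OF assms(1) x eq partial_linear(2)[OF assms(2)]])
      (rule smooth_on_partial_differentiable_dpar[OF assms(3) x])
qed

lemma dpar_scaleR_snoc:
  fixes \<phi> :: "real^'n::finite \<Rightarrow> real"
  assumes "open \<Omega>" "x \<in> \<Omega>"
    and "\<And>i y. y \<in> \<Omega> \<Longrightarrow> partial_differentiable i \<phi> y \<and> partial_differentiable i g y"
    and "\<And>fs i y. length fs < length es \<Longrightarrow> y \<in> \<Omega> \<Longrightarrow>
      partial_differentiable i (dpar fs (\<lambda>y. partial d \<phi> y *\<^sub>R g y)) y \<and>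
      partial_differentiable i (dpar fs (\<lambda>y. \<phi> y *\<^sub>R partial d g y)) y"
  shows "dpar (es @ [d]) (\<lambda>y. \<phi> y *\<^sub>R g y) x =
     dpar es (\<lambda>y. partial d \<phi> y *\<^sub>R g y) x + dpar es (\<lambda>y. \<phi> y *\<^sub>R partial d g y) x"
proof -
  have "\<forall>y\<in>\<Omega>. partial d (\<lambda>y. \<phi> y *\<^sub>R g y) y = partial d \<phi> y *\<^sub>R g y + \<phi> y *\<^sub>R partial d g y"
    using assms(3) by (auto intro: partial_scaleR(1))
  then have "dpar (es @ [d]) (\<lambda>y. \<phi> y *\<^sub>R g y) x =
      dpar es (\<lambda>y. partial d \<phi> y *\<^sub>R g y + \<phi> y *\<^sub>R partial d g y) x"
    using dpar_cong[OF assms(1,2)] by simp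
  also have "\<dots> = dpar es (\<lambda>y. partial d \<phi> y *\<^sub>R g y) x + dpar es (\<lambda>y. \<phi> y *\<^sub>R partial d g y) x"
    by (rule dpar_add_if_partial_differentiable[OF assms(1,2)]) (use assms(4) in blast)
  finally show ?thesis .
qed

lemma smooth_on_scaleR:
  fixes \<phi> :: "real^'n::finite \<Rightarrow> real" and g :: "real^'n \<Rightarrow> 'b::real_normed_vector"
  assumes "open \<Omega>" "smooth_on \<Omega> \<phi>" "smooth_on \<Omega> g"
  shows "smooth_on \<Omega> (\<lambda>y. \<phi> y *\<^sub>R g y)"
proof -
  have "\<forall>\<phi> (g :: real^'n \<Rightarrow> 'b). smooth_on \<Omega> \<phi> \<longrightarrow> smooth_on \<Omega> g \<longrightarrow> (\<forall>ds. length ds \<le> n \<longrightarrow>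
     continuous_on \<Omega> (dpar ds (\<lambda>y. \<phi> y *\<^sub>R g y)) \<and>
     (\<forall>i. \<forall>x\<in>\<Omega>. partial_differentiable i (dpar ds (\<lambda>y. \<phi> y *\<^sub>R g y)) x))" for n
  proof (induction n)
    case 0
    show ?case
    proof (intro allI impI)
      fix \<phi> :: "real^'n \<Rightarrow> real" and g :: "real^'n \<Rightarrow> 'b" and ds :: "'n list"
      assume "smooth_on \<Omega> \<phi>" "smooth_on \<Omega> g" "length ds \<le> 0"
      then show "continuous_on \<Omega> (dpar ds (\<lambda>y. \<phi> y *\<^sub>R g y)) \<and>
          (\<forall>i. \<forall>x\<in>\<Omega>. partial_differentiable i (dpar ds (\<lambda>y. \<phi> y *\<^sub>R g y)) x)"
        by (simp add: continuous_on_scaleR smooth_on_continuous_on partial_scaleR(2)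
            smooth_on_partial_differentiable)
    qed
  next
    case (Suc n)
    show ?case
    proof (intro allI impI)
      fix \<phi> :: "real^'n \<Rightarrow> real" and g :: "real^'n \<Rightarrow> 'b" and ds :: "'n list"
      assume \<phi>: "smooth_on \<Omega> \<phi>" and g: "smooth_on \<Omega> g" and len: "length ds \<le> Suc n"
      show "continuous_on \<Omega> (dpar ds (\<lambda>y. \<phi> y *\<^sub>R g y)) \<and>
          (\<forall>i. \<forall>x\<in>\<Omega>. partial_differentiable i (dpar ds (\<lambda>y. \<phi> y *\<^sub>R g y)) x)"
      proof (cases ds rule: rev_cases)
        case Nil
        then show ?thesis using Suc.IH[rule_format, OF \<phi> g, of ds] by simp
      next
        case (snoc es d)
        let ?A = "\<lambda>y. partial d \<phi> y *\<^sub>R g y" and ?B = "\<lambda>y. \<phi> y *\<^sub>R partial d g y"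
        have IH: "continuous_on \<Omega> (dpar fs ?A) \<and> continuous_on \<Omega> (dpar fs ?B) \<and>
            (\<forall>x\<in>\<Omega>. partial_differentiable i (dpar fs ?A) x \<and> partial_differentiable i (dpar fs ?B) x)"
          if "length fs \<le> length es" for fs i
          using Suc.IH[rule_format, OF smooth_on_partial[OF \<phi>] g, of fs]
            Suc.IH[rule_format, OF \<phi> smooth_on_partial[OF g], of fs] that len snoc by simp
        have pd: "partial_differentiable i \<phi> y \<and> partial_differentiable i g y" if "y \<in> \<Omega>" for i y
          using \<phi> g that by (simp add: smooth_on_partial_differentiable)
        have eq: "\<forall>y\<in>\<Omega>. dpar es ?A y + dpar es ?B y = dpar ds (\<lambda>y. \<phi> y *\<^sub>R g y) y"
          unfolding snoc
          by (intro ballI dpar_scaleR_snoc[OF assms(1) _ pd, symmetric]) (use IH less_imp_le in blast)+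
        have "continuous_on \<Omega> (\<lambda>y. dpar es ?A y + dpar es ?B y)"
          using IH[OF order_refl] by (intro continuous_on_add) blast+
        then have "continuous_on \<Omega> (dpar ds (\<lambda>y. \<phi> y *\<^sub>R g y))"
          by (rule continuous_on_eq[OF _ eq[rule_format]])
        moreover have "partial_differentiable i (dpar ds (\<lambda>y. \<phi> y *\<^sub>R g y)) x" if "x \<in> \<Omega>" for i x
          by (rule partial_differentiable_cong[OF assms(1) that eq partial_add(2)])
            (use IH[OF order_refl] that in blast)+
        ultimately show ?thesis by blast
      qed
    qed
  qed
  from this[rule_format, OF assms(2,3) order_refl] show ?thesis
    unfolding smooth_on_iff by blast
qed

lemma dpar_scaleR_step:
  fixes \<phi> :: "real^'n::finite \<Rightarrow> real"
  assumes "open \<Omega>" "smooth_on \<Omega> \<phi>" "smooth_on \<Omega> g" "x \<in> \<Omega>"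
  shows "dpar (es @ [d]) (\<lambda>y. \<phi> y *\<^sub>R g y) x =
     dpar es (\<lambda>y. partial d \<phi> y *\<^sub>R g y) x + dpar es (\<lambda>y. \<phi> y *\<^sub>R partial d g y) x"
  using assms smooth_on_scaleR[OF assms(1) smooth_on_partial[OF assms(2)] assms(3)]
    smooth_on_scaleR[OF assms(1) assms(2) smooth_on_partial[OF assms(3)]]
  by (intro dpar_scaleR_snoc) (auto intro: smooth_on_partial_differentiable smooth_on_partial_differentiable_dpar)

lemma smooth_on_sum:
  assumes "open \<Omega>" "finite I" "\<forall>k\<in>I. smooth_on \<Omega> (F k)"
  shows "smooth_on \<Omega> (\<lambda>y. \<Sum>k\<in>I. F k y)"
  using assms(2,3)
proof (induction I rule: finite_induct)
  case empty
  then show ?case using smooth_on_const[of \<Omega> 0] by simp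
next
  case (insert a I)
  then show ?case using smooth_on_add[OF assms(1), of "F a" "\<lambda>y. \<Sum>k\<in>I. F k y"] by simp
qed

lemma dpar_sum:
  assumes "open \<Omega>" "finite I" "\<forall>k\<in>I. smooth_on \<Omega> (F k)" "x \<in> \<Omega>"
  shows "dpar ds (\<lambda>y. \<Sum>k\<in>I. F k y) x = (\<Sum>k\<in>I. dpar ds (F k) x)"
  using assms(2,3)
proof (induction I rule: finite_induct)
  case empty
  then show ?case by (simp add: dpar_const)
next
  case (insert a I)
  have "smooth_on \<Omega> (\<lambda>y. \<Sum>k\<in>I. F k y)"
    using insert by (intro smooth_on_sum[OF assms(1)]) auto
  then have "dpar ds (\<lambda>y. F a y + (\<Sum>k\<in>I. F k y)) x = dpar ds (F a) x + dpar ds (\<lambda>y. \<Sum>k\<in>I. F k y) x"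
    using insert.prems by (intro dpar_add[OF assms(1) _ _ assms(4)]) auto
  then show ?case using insert by simp
qed

definition extends_continuously :: "(real^'n::finite) set \<Rightarrow> (real^'n \<Rightarrow> 'b::real_normed_vector) \<Rightarrow> bool"
  where "extends_continuously \<Omega> h \<longleftrightarrow> (\<exists>g. continuous_on (closure \<Omega>) g \<and> (\<forall>x\<in>\<Omega>. g x = h x))"

definition smooth_up_to_boundary ::
    "(real^'n::finite) set \<Rightarrow> (real^'n \<Rightarrow> 'b::real_normed_vector) \<Rightarrow> bool" where
  "smooth_up_to_boundary \<Omega> f \<longleftrightarrow> smooth_on \<Omega> f \<and> (\<forall>ds. extends_continuously \<Omega> (dpar ds f))"

lemma smooth_closure_iff:
  "smooth_closure \<Omega> f \<longleftrightarrow> smooth_up_to_boundary \<Omega> f \<and> continuous_on (closure \<Omega>) f"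
  unfolding smooth_closure_def smooth_up_to_boundary_def extends_continuously_def by auto

lemma extends_continuously_cong:
  "\<forall>x\<in>\<Omega>. h x = h' x \<Longrightarrow> extends_continuously \<Omega> h \<Longrightarrow> extends_continuously \<Omega> h'"
  unfolding extends_continuously_def by auto

lemma extends_continuously_add:
  assumes "extends_continuously \<Omega> f" "extends_continuously \<Omega> g"
  shows "extends_continuously \<Omega> (\<lambda>x. f x + g x)"
proof -
  obtain F G where "continuous_on (closure \<Omega>) F" "\<forall>x\<in>\<Omega>. F x = f x"
    "continuous_on (closure \<Omega>) G" "\<forall>x\<in>\<Omega>. G x = g x"
    using assms unfolding extends_continuously_def by blast
  then show ?thesis
    unfolding extends_continuously_def by (intro exI[of _ "\<lambda>x. F x + G x"]) (auto intro: continuous_on_add)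
qed

lemma extends_continuously_scaleR:
  assumes "extends_continuously \<Omega> f" "extends_continuously \<Omega> g"
  shows "extends_continuously \<Omega> (\<lambda>x. f x *\<^sub>R g x)"
proof -
  obtain F G where "continuous_on (closure \<Omega>) F" "\<forall>x\<in>\<Omega>. F x = f x"
    "continuous_on (closure \<Omega>) G" "\<forall>x\<in>\<Omega>. G x = g x"
    using assms unfolding extends_continuously_def by blast
  then show ?thesis
    unfolding extends_continuously_def
    by (intro exI[of _ "\<lambda>x. F x *\<^sub>R G x"]) (auto intro: continuous_on_scaleR)
qed

lemma extends_continuously_linear:
  assumes "bounded_linear L" "extends_continuously \<Omega> f"
  shows "extends_continuously \<Omega> (\<lambda>x. L (f x))"
proof -
  obtain F where "continuous_on (closure \<Omega>) F" "\<forall>x\<in>\<Omega>. F x = f x"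
    using assms(2) unfolding extends_continuously_def by blast
  then show ?thesis
    unfolding extends_continuously_def
    by (intro exI[of _ "\<lambda>x. L (F x)"])
      (auto intro: continuous_on_compose2[OF linear_continuous_on[OF assms(1)]])
qed

lemma smooth_up_to_boundary_smooth_on: "smooth_up_to_boundary \<Omega> f \<Longrightarrow> smooth_on \<Omega> f"
  unfolding smooth_up_to_boundary_def by blast

lemma smooth_up_to_boundary_extends_continuously:
  "smooth_up_to_boundary \<Omega> f \<Longrightarrow> extends_continuously \<Omega> (dpar ds f)"
  unfolding smooth_up_to_boundary_def by blast

lemma smooth_up_to_boundary_cong:
  assumes "open \<Omega>" "\<forall>y\<in>\<Omega>. f y = g y" "smooth_up_to_boundary \<Omega> f"
  shows "smooth_up_to_boundary \<Omega> g"
  unfolding smooth_up_to_boundary_def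
proof (intro conjI allI)
  show "smooth_on \<Omega> g"
    by (rule smooth_on_cong[OF assms(1,2) smooth_up_to_boundary_smooth_on[OF assms(3)]])
  fix ds
  have "\<forall>x\<in>\<Omega>. dpar ds f x = dpar ds g x"
    using dpar_cong[OF assms(1) _ assms(2)] by blast
  then show "extends_continuously \<Omega> (dpar ds g)"
    by (rule extends_continuously_cong) (rule smooth_up_to_boundary_extends_continuously[OF assms(3)])
qed

lemma smooth_up_to_boundary_partial:
  assumes "smooth_up_to_boundary \<Omega> f"
  shows "smooth_up_to_boundary \<Omega> (partial d f)"
  unfolding smooth_up_to_boundary_def
proof (intro conjI allI)
  show "smooth_on \<Omega> (partial d f)"
    by (rule smooth_on_partial[OF smooth_up_to_boundary_smooth_on[OF assms]])
  show "extends_continuously \<Omega> (dpar ds (partial d f))" for ds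
    using smooth_up_to_boundary_extends_continuously[OF assms, of "ds @ [d]"] by simp
qed

lemma smooth_up_to_boundary_add:
  assumes "open \<Omega>" "smooth_up_to_boundary \<Omega> f" "smooth_up_to_boundary \<Omega> g"
  shows "smooth_up_to_boundary \<Omega> (\<lambda>y. f y + g y)"
  unfolding smooth_up_to_boundary_def
proof (intro conjI allI)
  note smooth = assms(2,3)[THEN smooth_up_to_boundary_smooth_on]
  show "smooth_on \<Omega> (\<lambda>y. f y + g y)"
    by (rule smooth_on_add[OF assms(1) smooth])
  fix ds
  have "\<forall>x\<in>\<Omega>. dpar ds f x + dpar ds g x = dpar ds (\<lambda>y. f y + g y) x"
    using dpar_add[OF assms(1) smooth] by simp
  then show "extends_continuously \<Omega> (dpar ds (\<lambda>y. f y + g y))"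
    by (rule extends_continuously_cong[OF _ extends_continuously_add])
      (use assms(2,3) smooth_up_to_boundary_extends_continuously in blast)+
qed

lemma smooth_up_to_boundary_linear:
  assumes "open \<Omega>" "bounded_linear L" "smooth_up_to_boundary \<Omega> f"
  shows "smooth_up_to_boundary \<Omega> (\<lambda>y. L (f y))"
  unfolding smooth_up_to_boundary_def
proof (intro conjI allI)
  note smooth = smooth_up_to_boundary_smooth_on[OF assms(3)]
  show "smooth_on \<Omega> (\<lambda>y. L (f y))"
    by (rule smooth_on_linear[OF assms(1,2) smooth])
  fix ds
  have "\<forall>x\<in>\<Omega>. L (dpar ds f x) = dpar ds (\<lambda>y. L (f y)) x"
    using dpar_linear[OF assms(1,2) smooth] by simp
  then show "extends_continuously \<Omega> (dpar ds (\<lambda>y. L (f y)))"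
    by (rule extends_continuously_cong[OF _ extends_continuously_linear[OF assms(2)]])
      (rule smooth_up_to_boundary_extends_continuously[OF assms(3)])
qed

lemma smooth_up_to_boundary_scaleR:
  fixes \<phi> :: "real^'n::finite \<Rightarrow> real" and g :: "real^'n \<Rightarrow> 'b::real_normed_vector"
  assumes "open \<Omega>" "smooth_up_to_boundary \<Omega> \<phi>" "smooth_up_to_boundary \<Omega> g"
  shows "smooth_up_to_boundary \<Omega> (\<lambda>y. \<phi> y *\<^sub>R g y)"
proof -
  have "\<forall>\<phi> (g :: real^'n \<Rightarrow> 'b). smooth_up_to_boundary \<Omega> \<phi> \<longrightarrow> smooth_up_to_boundary \<Omega> g \<longrightarrow>
      extends_continuously \<Omega> (dpar ds (\<lambda>y. \<phi> y *\<^sub>R g y))" for ds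
  proof (induction ds rule: rev_induct)
    case Nil
    show ?case
    proof (intro allI impI)
      fix \<phi> :: "real^'n \<Rightarrow> real" and g :: "real^'n \<Rightarrow> 'b"
      assume "smooth_up_to_boundary \<Omega> \<phi>" "smooth_up_to_boundary \<Omega> g"
      from this[THEN smooth_up_to_boundary_extends_continuously, of "[]"]
      show "extends_continuously \<Omega> (dpar [] (\<lambda>y. \<phi> y *\<^sub>R g y))"
        by (simp add: extends_continuously_scaleR)
    qed
  next
    case (snoc d es)
    show ?case
    proof (intro allI impI)
      fix \<phi> :: "real^'n \<Rightarrow> real" and g :: "real^'n \<Rightarrow> 'b"
      assume \<phi>: "smooth_up_to_boundary \<Omega> \<phi>" and g: "smooth_up_to_boundary \<Omega> g"
      have "\<forall>x\<in>\<Omega>. dpar es (\<lambda>y. partial d \<phi> y *\<^sub>R g y) x + dpar es (\<lambda>y. \<phi> y *\<^sub>R partial d g y) x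
          = dpar (es @ [d]) (\<lambda>y. \<phi> y *\<^sub>R g y) x"
        using dpar_scaleR_step[OF assms(1) \<phi>[THEN smooth_up_to_boundary_smooth_on]
            g[THEN smooth_up_to_boundary_smooth_on]] by simp
      then show "extends_continuously \<Omega> (dpar (es @ [d]) (\<lambda>y. \<phi> y *\<^sub>R g y))"
        by (rule extends_continuously_cong[OF _ extends_continuously_add[OF
              snoc.IH[rule_format, OF smooth_up_to_boundary_partial[OF \<phi>, of d] g]
              snoc.IH[rule_format, OF \<phi> smooth_up_to_boundary_partial[OF g, of d]]]])
    qed
  qed
  from this[rule_format, OF assms(2,3)]
    smooth_on_scaleR[OF assms(1) assms(2,3)[THEN smooth_up_to_boundary_smooth_on]]
  show ?thesis
    unfolding smooth_up_to_boundary_def by blast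
qed

lemma smooth_up_to_boundary_const: "smooth_up_to_boundary \<Omega> (\<lambda>y. c)"
proof -
  have "extends_continuously \<Omega> (\<lambda>y. k)" for k :: 'b
    unfolding extends_continuously_def by (intro exI[of _ "\<lambda>y. k"]) simp
  then show ?thesis
    unfolding smooth_up_to_boundary_def by (simp add: smooth_on_const dpar_const)
qed

lemma smooth_closure_smooth_on: "smooth_closure \<Omega> f \<Longrightarrow> smooth_on \<Omega> f"
  unfolding smooth_closure_def by blast

lemma smooth_closure_add:
  "open \<Omega> \<Longrightarrow> smooth_closure \<Omega> f \<Longrightarrow> smooth_closure \<Omega> g \<Longrightarrow> smooth_closure \<Omega> (\<lambda>y. f y + g y)"
  unfolding smooth_closure_iff by (auto intro: smooth_up_to_boundary_add continuous_on_add)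

lemma smooth_closure_linear:
  assumes "open \<Omega>" "bounded_linear L" "smooth_closure \<Omega> f"
  shows "smooth_closure \<Omega> (\<lambda>y. L (f y))"
  using assms unfolding smooth_closure_iff
  by (auto intro: smooth_up_to_boundary_linear continuous_on_compose2[OF linear_continuous_on[OF assms(2)]])

lemma smooth_closure_scaleR:
  fixes \<phi> :: "real^'n::finite \<Rightarrow> real"
  shows "open \<Omega> \<Longrightarrow> smooth_closure \<Omega> \<phi> \<Longrightarrow> smooth_closure \<Omega> g \<Longrightarrow> smooth_closure \<Omega> (\<lambda>y. \<phi> y *\<^sub>R g y)"
  unfolding smooth_closure_iff by (auto intro: smooth_up_to_boundary_scaleR continuous_on_scaleR)

lemma smooth_closure_const: "smooth_closure \<Omega> (\<lambda>y. c)"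
  unfolding smooth_closure_iff by (simp add: smooth_up_to_boundary_const)

lemma smooth_closure_sum:
  assumes "open \<Omega>" "finite I" "\<forall>k\<in>I. smooth_closure \<Omega> (F k)"
  shows "smooth_closure \<Omega> (\<lambda>y. \<Sum>k\<in>I. F k y)"
  using assms(2,3)
proof (induction I rule: finite_induct)
  case empty
  then show ?case using smooth_closure_const[of \<Omega> 0] by simp
next
  case (insert a I)
  then show ?case using smooth_closure_add[OF assms(1), of "F a" "\<lambda>y. \<Sum>k\<in>I. F k y"] by simp
qed

lemma has_real_derivative_iterated_deriv:
  assumes "\<forall>k t. (deriv ^^ k) h differentiable (at t)"
  shows "((deriv ^^ m) h has_real_derivative (deriv ^^ Suc m) h u) (at u)"
proof -
  have "((deriv ^^ m) h has_real_derivative deriv ((deriv ^^ m) h) u) (at u)"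
    using assms DERIV_deriv_iff_real_differentiable by blast
  then show ?thesis by simp
qed

lemma continuous_on_iterated_deriv:
  fixes h :: "real \<Rightarrow> real"
  assumes "\<forall>k t. (deriv ^^ k) h differentiable (at t)"
  shows "continuous_on S ((deriv ^^ k) h)"
proof (rule continuous_at_imp_continuous_on, rule ballI)
  fix x
  show "isCont ((deriv ^^ k) h) x"
    by (rule DERIV_isCont[OF has_real_derivative_iterated_deriv[OF assms]])
qed

lemma has_vector_derivative_oscillating_line:
  fixes x :: "real^'n::finite"
  assumes "\<forall>k t. (deriv ^^ k) h differentiable (at t)"
  shows "((\<lambda>t. c * (deriv ^^ m) h (lam * ((x + t *\<^sub>R axis d 1) \<bullet> axis i 1))) has_vector_derivative
     (if d = i then c * lam * (deriv ^^ Suc m) h (lam * (x \<bullet> axis i 1)) else 0)) (at 0)"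
proof (cases "d = i")
  case True
  let ?a = "lam * (x \<bullet> axis i 1)"
  have line: "(\<lambda>t. c * (deriv ^^ m) h (lam * ((x + t *\<^sub>R axis d 1) \<bullet> axis i 1))) =
      (\<lambda>t. c * (deriv ^^ m) h (?a + lam * t))"
    using True by (simp add: inner_axis_axis algebra_simps)
  have "((\<lambda>t. ?a + lam * t) has_real_derivative lam) (at 0)"
    by (auto intro!: derivative_eq_intros)
  from DERIV_chain2[OF has_real_derivative_iterated_deriv[OF assms] this]
  have "((\<lambda>t. c * (deriv ^^ m) h (?a + lam * t)) has_real_derivative
      c * ((deriv ^^ Suc m) h ?a * lam)) (at 0)"
    by (intro DERIV_cmult) simp
  then show ?thesis
    using True unfolding line
    by (simp add: has_real_derivative_iff_has_vector_derivative[symmetric] algebra_simps)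
next
  case False
  then show ?thesis by (simp add: inner_add_left inner_axis_axis)
qed

lemma dpar_oscillating:
  fixes x :: "real^'n::finite"
  assumes "\<forall>k t. (deriv ^^ k) h differentiable (at t)"
  shows "dpar ds (\<lambda>y. h (lam * (y \<bullet> axis i 1))) x =
    (if set ds \<subseteq> {i} then lam ^ length ds * (deriv ^^ length ds) h (lam * (x \<bullet> axis i 1)) else 0)"
proof (induction ds arbitrary: x)
  case Nil
  then show ?case by simp
next
  case (Cons d ds)
  have IH: "dpar ds (\<lambda>y. h (lam * (y \<bullet> axis i 1))) = (\<lambda>y. if set ds \<subseteq> {i}
      then lam ^ length ds * (deriv ^^ length ds) h (lam * (y \<bullet> axis i 1)) else 0)"
    using Cons.IH by auto
  show ?case
  proof (cases "set ds \<subseteq> {i}")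
    case True
    have "partial d (\<lambda>y. lam ^ length ds * (deriv ^^ length ds) h (lam * (y \<bullet> axis i 1))) x =
       (if d = i then lam ^ length ds * lam * (deriv ^^ Suc (length ds)) h (lam * (x \<bullet> axis i 1)) else 0)"
      by (rule partial_eqI) (rule has_vector_derivative_oscillating_line[OF assms])
    then show ?thesis using True by (simp add: IH algebra_simps)
  next
    case False
    then show ?thesis by (simp add: IH partial_const)
  qed
qed

lemma smooth_closure_oscillating:
  fixes \<Omega> :: "(real^'n::finite) set"
  assumes "\<forall>k t. (deriv ^^ k) h differentiable (at t)"
  shows "smooth_closure \<Omega> (\<lambda>y. h (lam * (y \<bullet> axis i 1)))"
proof -
  have continuous: "continuous_on S (dpar ds (\<lambda>y. h (lam * (y \<bullet> axis i 1))))" for S ds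
  proof -
    have "continuous_on S (\<lambda>y. lam ^ length ds * (deriv ^^ length ds) h (lam * (y \<bullet> axis i 1)))"
      by (intro continuous_intros continuous_on_compose2[OF continuous_on_iterated_deriv[OF assms]])
        auto
    then show ?thesis
      unfolding dpar_oscillating[OF assms, abs_def] by (cases "set ds \<subseteq> {i}") auto
  qed
  have "partial_differentiable d (dpar ds (\<lambda>y. h (lam * (y \<bullet> axis i 1)))) x" for ds x d
    unfolding dpar_oscillating[OF assms, abs_def]
    by (cases "set ds \<subseteq> {i}")
      (auto intro: partial_differentiableI has_vector_derivative_oscillating_line[OF assms]
        simp: partial_const)
  moreover have "\<exists>g. continuous_on (closure \<Omega>) g \<and>
      (\<forall>x\<in>\<Omega>. g x = dpar ds (\<lambda>y. h (lam * (y \<bullet> axis i 1))) x)" for ds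
    using continuous[of "closure \<Omega>" ds] by blast
  ultimately show ?thesis
    using continuous[of \<Omega>] continuous[of "closure \<Omega>" "[]"]
    unfolding smooth_closure_def smooth_on_iff by simp
qed

definition deriv_bounded ::
    "(real^'n::finite) set \<Rightarrow> (real^'n \<Rightarrow> 'b::real_normed_vector) \<Rightarrow> (nat \<Rightarrow> real) \<Rightarrow> bool" where
  "deriv_bounded \<Omega> f B \<longleftrightarrow> (\<forall>ds. \<forall>x\<in>\<Omega>. norm (dpar ds f x) \<le> B (length ds))"

lemma deriv_boundedD: "deriv_bounded \<Omega> f B \<Longrightarrow> x \<in> \<Omega> \<Longrightarrow> norm (dpar ds f x) \<le> B (length ds)"
  unfolding deriv_bounded_def by blast

lemma deriv_bounded_mono:
  "deriv_bounded \<Omega> f B \<Longrightarrow> (\<And>m. B m \<le> B' m) \<Longrightarrow> deriv_bounded \<Omega> f B'"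
  unfolding deriv_bounded_def by (meson order_trans)

lemma deriv_bounded_oscillating:
  fixes \<Omega> :: "(real^'n::finite) set"
  assumes "\<forall>k t. (deriv ^^ k) h differentiable (at t)" "\<forall>k t. \<bar>(deriv ^^ k) h t\<bar> \<le> H k" "lam \<ge> 0"
  shows "deriv_bounded \<Omega> (\<lambda>y. h (lam * (y \<bullet> axis i 1))) (\<lambda>m. lam ^ m * H m)"
  unfolding deriv_bounded_def
proof (intro allI ballI)
  fix ds :: "'n list" and x :: "real^'n"
  have "0 \<le> H (length ds)" using assms(2) by (meson abs_ge_zero order_trans)
  moreover have "\<bar>lam ^ length ds * (deriv ^^ length ds) h (lam * (x \<bullet> axis i 1))\<bar> \<le>
      lam ^ length ds * H (length ds)"
    using assms(2,3) by (simp add: abs_mult mult_left_mono)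
  ultimately show "norm (dpar ds (\<lambda>y. h (lam * (y \<bullet> axis i 1))) x) \<le> lam ^ length ds * H (length ds)"
    unfolding dpar_oscillating[OF assms(1)] using assms(3) by auto
qed

lemma deriv_bounded_linear:
  assumes "open \<Omega>" "bounded_linear L" "smooth_on \<Omega> f" "deriv_bounded \<Omega> f B"
  shows "deriv_bounded \<Omega> (\<lambda>y. L (f y)) (\<lambda>m. onorm L * B m)"
  unfolding deriv_bounded_def
proof (intro allI ballI)
  fix ds x assume x: "x \<in> \<Omega>"
  have "norm (dpar ds (\<lambda>y. L (f y)) x) \<le> onorm L * norm (dpar ds f x)"
    unfolding dpar_linear[OF assms(1-3) x] by (rule onorm[OF assms(2)])
  also have "\<dots> \<le> onorm L * B (length ds)"
    using deriv_boundedD[OF assms(4) x] onorm_pos_le[OF assms(2)] by (rule mult_left_mono)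
  finally show "norm (dpar ds (\<lambda>y. L (f y)) x) \<le> onorm L * B (length ds)" .
qed

text \<open>The binomial convolution \<open>\<Sum>r\<le>m. (m choose r) * P r * Q (m - r)\<close>, written recursively
  to match the way the product rule unfolds one derivative at a time.\<close>

fun leibniz_bound :: "(nat \<Rightarrow> real) \<Rightarrow> (nat \<Rightarrow> real) \<Rightarrow> nat \<Rightarrow> real" where
  "leibniz_bound P Q 0 = P 0 * Q 0"
| "leibniz_bound P Q (Suc m) = leibniz_bound (\<lambda>r. P (Suc r)) Q m + leibniz_bound P (\<lambda>r. Q (Suc r)) m"

lemma leibniz_bound_scale:
  "leibniz_bound (\<lambda>r. a * x ^ r * P r) (\<lambda>r. b * x ^ r * Q r) m = a * b * x ^ m * leibniz_bound P Q m"
proof (induction m arbitrary: a b P Q)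
  case 0
  then show ?case by simp
next
  case (Suc m)
  have "(\<lambda>r. a * x ^ Suc r * P (Suc r)) = (\<lambda>r. (a * x) * x ^ r * P (Suc r))"
    "(\<lambda>r. b * x ^ Suc r * Q (Suc r)) = (\<lambda>r. (b * x) * x ^ r * Q (Suc r))"
    by (auto simp: algebra_simps)
  then show ?case
    by (simp only: leibniz_bound.simps Suc.IH) (simp add: algebra_simps)
qed

lemma leibniz_bound_nonneg: "(\<And>r. 0 \<le> P r) \<Longrightarrow> (\<And>r. 0 \<le> Q r) \<Longrightarrow> 0 \<le> leibniz_bound P Q m"
  by (induction m arbitrary: P Q) auto

lemma deriv_bounded_scaleR:
  fixes \<phi> :: "real^'n::finite \<Rightarrow> real" and g :: "real^'n \<Rightarrow> 'b::real_normed_vector"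
  assumes "open \<Omega>" "smooth_on \<Omega> \<phi>" "smooth_on \<Omega> g" "deriv_bounded \<Omega> \<phi> P" "deriv_bounded \<Omega> g Q"
  shows "deriv_bounded \<Omega> (\<lambda>y. \<phi> y *\<^sub>R g y) (leibniz_bound P Q)"
proof -
  have "\<forall>\<phi> (g :: real^'n \<Rightarrow> 'b) P Q. smooth_on \<Omega> \<phi> \<longrightarrow> smooth_on \<Omega> g \<longrightarrow>
      deriv_bounded \<Omega> \<phi> P \<longrightarrow> deriv_bounded \<Omega> g Q \<longrightarrow>
      (\<forall>x\<in>\<Omega>. norm (dpar ds (\<lambda>y. \<phi> y *\<^sub>R g y) x) \<le> leibniz_bound P Q (length ds))" for ds
  proof (induction ds rule: rev_induct)
    case Nil
    show ?case
    proof (intro allI impI ballI)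
      fix \<phi> :: "real^'n \<Rightarrow> real" and g :: "real^'n \<Rightarrow> 'b" and P Q x
      assume "deriv_bounded \<Omega> \<phi> P" "deriv_bounded \<Omega> g Q" "x \<in> \<Omega>"
      from this(1,2)[THEN deriv_boundedD, OF this(3), of "[]"]
      have "\<bar>\<phi> x\<bar> \<le> P 0" "norm (g x) \<le> Q 0" by simp_all
      then show "norm (dpar [] (\<lambda>y. \<phi> y *\<^sub>R g y) x) \<le> leibniz_bound P Q (length ([] :: 'n list))"
        by (simp add: mult_mono)
    qed
  next
    case (snoc d es)
    show ?case
    proof (intro allI impI ballI)
      fix \<phi> :: "real^'n \<Rightarrow> real" and g :: "real^'n \<Rightarrow> 'b" and P Q x
      assume \<phi>: "smooth_on \<Omega> \<phi>" and g: "smooth_on \<Omega> g"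
        and P: "deriv_bounded \<Omega> \<phi> P" and Q: "deriv_bounded \<Omega> g Q" and x: "x \<in> \<Omega>"
      have P': "deriv_bounded \<Omega> (partial d \<phi>) (\<lambda>r. P (Suc r))"
        using P unfolding deriv_bounded_def by (metis dpar_append dpar.simps length_append_singleton)
      have Q': "deriv_bounded \<Omega> (partial d g) (\<lambda>r. Q (Suc r))"
        using Q unfolding deriv_bounded_def by (metis dpar_append dpar.simps length_append_singleton)
      have "norm (dpar (es @ [d]) (\<lambda>y. \<phi> y *\<^sub>R g y) x) \<le>
          norm (dpar es (\<lambda>y. partial d \<phi> y *\<^sub>R g y) x) + norm (dpar es (\<lambda>y. \<phi> y *\<^sub>R partial d g y) x)"
        unfolding dpar_scaleR_step[OF assms(1) \<phi> g x] by (rule norm_triangle_ineq)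
      also have "\<dots> \<le> leibniz_bound (\<lambda>r. P (Suc r)) Q (length es) + leibniz_bound P (\<lambda>r. Q (Suc r)) (length es)"
        using snoc.IH[rule_format, OF smooth_on_partial[OF \<phi>] g P' Q x]
          snoc.IH[rule_format, OF \<phi> smooth_on_partial[OF g] P Q' x]
        by (rule add_mono)
      finally show "norm (dpar (es @ [d]) (\<lambda>y. \<phi> y *\<^sub>R g y) x) \<le> leibniz_bound P Q (length (es @ [d]))"
        by simp
    qed
  qed
  from this[rule_format, OF assms(2-5)] show ?thesis
    unfolding deriv_bounded_def by blast
qed

lemma deriv_bounded_scaleR_const:
  assumes "open \<Omega>" "smooth_on \<Omega> f" "deriv_bounded \<Omega> f B"
  shows "deriv_bounded \<Omega> (\<lambda>y. c *\<^sub>R f y) (\<lambda>m. \<bar>c\<bar> * B m)"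
  unfolding deriv_bounded_def
  using dpar_linear[OF assms(1) bounded_linear_scaleR_right assms(2)] deriv_boundedD[OF assms(3)]
  by (simp add: mult_left_mono)

lemma deriv_bounded_sum:
  assumes "open \<Omega>" "finite I" "\<forall>k\<in>I. smooth_on \<Omega> (F k)" "\<forall>k\<in>I. deriv_bounded \<Omega> (F k) (B k)"
  shows "deriv_bounded \<Omega> (\<lambda>y. \<Sum>k\<in>I. F k y) (\<lambda>m. \<Sum>k\<in>I. B k m)"
  unfolding deriv_bounded_def
proof (intro allI ballI)
  fix ds x assume x: "x \<in> \<Omega>"
  have "norm (dpar ds (\<lambda>y. \<Sum>k\<in>I. F k y) x) \<le> (\<Sum>k\<in>I. norm (dpar ds (F k) x))"
    unfolding dpar_sum[OF assms(1-3) x] by (rule norm_sum)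
  also have "\<dots> \<le> (\<Sum>k\<in>I. B k (length ds))"
    using assms(4) x by (intro sum_mono) (auto dest: deriv_boundedD)
  finally show "norm (dpar ds (\<lambda>y. \<Sum>k\<in>I. F k y) x) \<le> (\<Sum>k\<in>I. B k (length ds))" .
qed

lemma deriv_bounded_add_scaleR:
  assumes "open \<Omega>" "smooth_on \<Omega> f" "smooth_on \<Omega> g" "deriv_bounded \<Omega> f B1" "deriv_bounded \<Omega> g B2"
    and "0 \<le> c" "c \<le> 1"
  shows "deriv_bounded \<Omega> (\<lambda>y. f y + c *\<^sub>R g y) (\<lambda>m. B1 m + B2 m)"
  unfolding deriv_bounded_def
proof (intro allI ballI)
  fix ds x assume x: "x \<in> \<Omega>"
  have "dpar ds (\<lambda>y. f y + c *\<^sub>R g y) x = dpar ds f x + c *\<^sub>R dpar ds g x"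
    using dpar_add[OF assms(1,2) smooth_on_linear[OF assms(1) bounded_linear_scaleR_right assms(3)] x]
      dpar_linear[OF assms(1) bounded_linear_scaleR_right assms(3) x] by simp
  then have "norm (dpar ds (\<lambda>y. f y + c *\<^sub>R g y) x) \<le> norm (dpar ds f x) + c * norm (dpar ds g x)"
    using assms(6) by (simp add: norm_triangle_le)
  also have "\<dots> \<le> B1 (length ds) + 1 * B2 (length ds)"
    using assms(4-7) x by (intro add_mono mult_mono) (auto dest: deriv_boundedD)
  finally show "norm (dpar ds (\<lambda>y. f y + c *\<^sub>R g y) x) \<le> B1 (length ds) + B2 (length ds)"
    by simp
qed

lemma deriv_bounded_zero: "(\<And>m. 0 \<le> B m) \<Longrightarrow> deriv_bounded \<Omega> (\<lambda>y. 0) B"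
  by (simp add: deriv_bounded_def dpar_const)

lemma smooth_periodic_differentiable:
  "smooth_periodic h \<Longrightarrow> \<forall>k t. (deriv ^^ k) h differentiable (at t)"
  unfolding smooth_periodic_def by blast

lemma smooth_periodic_iterated_deriv_periodic:
  assumes "smooth_periodic h"
  shows "(deriv ^^ k) h (t + 2 * pi) = (deriv ^^ k) h t"
proof (induction k arbitrary: t)
  case 0
  then show ?case using assms unfolding smooth_periodic_def by simp
next
  case (Suc k)
  note D = has_real_derivative_iterated_deriv[OF smooth_periodic_differentiable[OF assms]]
  have "((deriv ^^ k) h has_real_derivative (deriv ^^ Suc k) h (t + 2 * pi)) (at (t + 2 * pi))"
    by (rule D)
  then have "((\<lambda>s. (deriv ^^ k) h (s + 2 * pi)) has_real_derivative
      (deriv ^^ Suc k) h (t + 2 * pi)) (at t)"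
    by (simp add: DERIV_shift)
  moreover have "(\<lambda>s. (deriv ^^ k) h (s + 2 * pi)) = (deriv ^^ k) h"
    using Suc.IH by auto
  ultimately show ?case
    using D by (metis DERIV_unique)
qed

lemma periodic_int:
  fixes g :: "real \<Rightarrow> 'a"
  assumes "\<forall>t. g (t + p) = g t"
  shows "g (s + of_int n * p) = g s"
proof (induction n rule: int_induct[where k = 0])
  case base
  then show ?case by simp
next
  case (step1 n)
  then show ?case using assms[rule_format, of "s + of_int n * p"] by (simp add: algebra_simps)
next
  case (step2 n)
  then show ?case using assms[rule_format, of "s + of_int (n - 1) * p"] by (simp add: algebra_simps)
qed

lemma periodic_continuous_bounded:
  fixes g :: "real \<Rightarrow> real"
  assumes "continuous_on UNIV g" "\<forall>t. g (t + 2 * pi) = g t"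
  obtains B where "\<forall>t. \<bar>g t\<bar> \<le> B"
proof -
  have "compact (g ` {0..2*pi})"
    using assms(1) by (intro compact_continuous_image) (auto intro: continuous_on_subset)
  then obtain B where B: "\<forall>y\<in>g ` {0..2*pi}. \<bar>y\<bar> \<le> B"
    using compact_imp_bounded bounded_real by metis
  have "\<bar>g t\<bar> \<le> B" for t
  proof -
    define s where "s = t - of_int \<lfloor>t / (2 * pi)\<rfloor> * (2 * pi)"
    have "s \<in> {0..2*pi}"
      using floor_divide_lower[of "2 * pi" t] floor_divide_upper[of "2 * pi" t]
      unfolding s_def by (auto simp: algebra_simps)
    moreover have "g t = g s"
      using periodic_int[OF assms(2), of s "\<lfloor>t / (2 * pi)\<rfloor>"] unfolding s_def by simp
    ultimately show ?thesis using B by auto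
  qed
  then show ?thesis using that by blast
qed

lemma smooth_periodic_iterated_deriv_bounded:
  assumes "smooth_periodic h"
  obtains H where "\<forall>k t. \<bar>(deriv ^^ k) h t\<bar> \<le> H k"
proof -
  have "\<exists>B. \<forall>t. \<bar>(deriv ^^ k) h t\<bar> \<le> B" for k
    using continuous_on_iterated_deriv[OF smooth_periodic_differentiable[OF assms]]
      smooth_periodic_iterated_deriv_periodic[OF assms]
    by (metis periodic_continuous_bounded)
  then show ?thesis using that by metis
qed

lemma has_real_derivative_signed_integral:
  fixes g :: "real \<Rightarrow> real"
  assumes "continuous_on UNIV g"
  shows "((\<lambda>u. integral {0..u} g - integral {u..0} g) has_real_derivative g x) (at x)"
proof -
  define a where "a = - (\<bar>x\<bar> + 1)"
  define b where "b = \<bar>x\<bar> + 1"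
  have ab: "a < x" "x < b" "a < 0" "0 < b" unfolding a_def b_def by auto
  have int: "g integrable_on {c..d}" for c d
    using assms by (intro integrable_continuous_interval) (auto intro: continuous_on_subset)
  have eq: "integral {0..u} g - integral {u..0} g = integral {a..u} g - integral {a..0} g"
    if "u \<in> {a<..<b}" for u
  proof (cases "0 \<le> u")
    case True
    have "integral {a..0} g + integral {0..u} g = integral {a..u} g"
      using ab True int by (intro Henstock_Kurzweil_Integration.integral_combine) auto
    moreover have "integral {u..0} g = 0"
      using True by (cases "u = 0") auto
    ultimately show ?thesis by simp
  next
    case False
    have "integral {a..u} g + integral {u..0} g = integral {a..0} g"
      using ab False that int by (intro Henstock_Kurzweil_Integration.integral_combine) auto
    then show ?thesis using False by simp
  qed
  have "((\<lambda>u. integral {a..u} g) has_real_derivative g x) (at x within {a..b})"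
    using assms ab by (intro integral_has_real_derivative) (auto intro: continuous_on_subset)
  then have "((\<lambda>u. integral {a..u} g) has_real_derivative g x) (at x within {a<..<b})"
    by (rule DERIV_subset) auto
  moreover have "at x within {a<..<b} = at x"
    using ab by (intro at_within_open) auto
  ultimately have "((\<lambda>u. integral {a..u} g) has_real_derivative g x) (at x)"
    by simp
  then have "((\<lambda>u. integral {a..u} g - integral {a..0} g) has_real_derivative g x) (at x)"
    by (auto intro!: derivative_eq_intros)
  then show ?thesis
    by (rule has_field_derivative_transform_within_open[of _ _ _ "{a<..<b}"]) (use ab eq in auto)
qed

lemma smooth_periodic_antiderivative:
  assumes "smooth_periodic \<gamma>" "zero_mean \<gamma>"
  obtains \<Phi> where "smooth_periodic \<Phi>" "zero_mean \<Phi>" "\<forall>t. (\<Phi> has_real_derivative \<gamma> t) (at t)"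
proof -
  note smooth = smooth_periodic_differentiable[OF assms(1)]
  have "continuous_on UNIV \<gamma>"
    using continuous_on_iterated_deriv[OF smooth, of UNIV 0] by simp
  define F where "F u = integral {0..u} \<gamma> - integral {u..0} \<gamma>" for u
  have F': "(F has_real_derivative \<gamma> t) (at t)" for t
    unfolding F_def[abs_def] using \<open>continuous_on UNIV \<gamma>\<close> by (rule has_real_derivative_signed_integral)
  have F_periodic: "F (t + 2 * pi) = F t" for t
  proof -
    have "((\<lambda>t. F (t + 2 * pi) - F t) has_real_derivative 0) (at s)" for s
    proof -
      have "((\<lambda>t. F (t + 2 * pi) - F t) has_real_derivative \<gamma> (s + 2 * pi) - \<gamma> s) (at s)"
        using DERIV_shift[THEN iffD1, OF F'] F' by (rule DERIV_diff)
      then show ?thesis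
        using smooth_periodic_iterated_deriv_periodic[OF assms(1), of 0 s] by simp
    qed
    then have "F (t + 2 * pi) - F t = F (0 + 2 * pi) - F 0"
      using DERIV_isconst_all[of "\<lambda>t. F (t + 2 * pi) - F t" t 0] by blast
    moreover have "F (2 * pi) = 0" "F 0 = 0"
      using assms(2) pi_gt_zero unfolding F_def zero_mean_def by auto
    ultimately show ?thesis by simp
  qed
  define c where "c = integral {0..2*pi} F / (2 * pi)"
  define \<Phi> where "\<Phi> u = F u - c" for u
  have \<Phi>': "(\<Phi> has_real_derivative \<gamma> t) (at t)" for t
    unfolding \<Phi>_def[abs_def] using F' by (auto intro!: derivative_eq_intros)
  then have "deriv \<Phi> = \<gamma>" using DERIV_imp_deriv by blast
  then have "(deriv ^^ Suc k) \<Phi> = (deriv ^^ k) \<gamma>" for k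
    by (simp add: funpow_Suc_right del: funpow.simps)
  then have "(deriv ^^ k) \<Phi> differentiable (at t)" for k t
    using \<Phi>' smooth by (cases k) (auto simp: real_differentiable_def)
  moreover have "\<Phi> (t + 2 * pi) = \<Phi> t" for t
    unfolding \<Phi>_def using F_periodic by simp
  moreover have "zero_mean \<Phi>"
  proof -
    have "F integrable_on {0..2*pi}"
      using F' by (intro integrable_continuous_interval continuous_at_imp_continuous_on ballI DERIV_isCont)
    then have "integral {0..2*pi} \<Phi> = integral {0..2*pi} F - integral {0..2*pi} (\<lambda>u. c)"
      unfolding \<Phi>_def by (intro integral_diff) auto
    then show ?thesis
      unfolding zero_mean_def c_def by simp
  qed
  ultimately show ?thesis
    using that \<Phi>' unfolding smooth_periodic_def by blast
qed

section \<open>Correcting a symmetric matrix into the off-diagonal span\<close>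

lemma outer_add_left: "outer (u + v) w = outer u w + outer v w"
  unfolding outer_def by (simp add: vec_eq_iff algebra_simps)

lemma outer_add_right: "outer w (u + v) = outer w u + outer w v"
  unfolding outer_def by (simp add: vec_eq_iff algebra_simps)

lemma outer_scaleR_left: "outer (c *\<^sub>R u) w = c *\<^sub>R outer u w"
  unfolding outer_def by (simp add: vec_eq_iff algebra_simps)

lemma outer_scaleR_right: "outer w (c *\<^sub>R u) = c *\<^sub>R outer w u"
  unfolding outer_def by (simp add: vec_eq_iff algebra_simps)

lemma transpose_outer: "transpose (outer u v) = outer v u"
  unfolding transpose_def outer_def by (simp add: vec_eq_iff mult.commute)

lemma norm_axis_plus_axis: "a \<noteq> b \<Longrightarrow> norm (axis a (1::real) + axis b 1) = sqrt 2"
  by (simp add: norm_eq_sqrt_inner inner_add_left inner_add_right inner_axis_axis)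

lemma outer_xi_pair_entry:
  assumes "a \<noteq> b"
  shows "outer (xi_pair a b) (xi_pair a b) $ p $ q =
    ((if p = a then 1 else 0) + (if p = b then 1 else 0)) * ((if q = a then 1 else 0) + (if q = b then 1 else 0)) / 2"
proof -
  have "(1 / sqrt 2) * (1 / sqrt 2) = (1 / 2 :: real)"
    by (simp add: field_simps)
  then show ?thesis
    unfolding outer_def xi_pair_def norm_axis_plus_axis[OF assms] by (simp add: axis_def algebra_simps)
qed

lemma sum_offdiag_pairs_swap:
  fixes g :: "'n::finite \<Rightarrow> 'n \<Rightarrow> 'a::comm_monoid_add"
  shows "(\<Sum>a\<in>UNIV. \<Sum>b\<in>UNIV - {a}. g a b) = (\<Sum>a\<in>UNIV. \<Sum>b\<in>UNIV - {a}. g b a)"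
proof -
  have "UNIV - {a} = {b \<in> UNIV. b \<noteq> a}" "UNIV - {a} = {b \<in> UNIV. a \<noteq> b}" for a :: 'n
    by auto
  then show ?thesis
    using sum.swap_restrict[of UNIV UNIV g "\<lambda>a b. b \<noteq> a"] by simp
qed

lemma sum_offdiag_pairs_delta_diag:
  fixes f :: "'n::finite \<Rightarrow> 'n \<Rightarrow> 'a::comm_monoid_add"
  shows "(\<Sum>a\<in>UNIV. \<Sum>b\<in>UNIV - {a}. if p = a \<and> q = a then f a b else 0) =
    (if p = q then \<Sum>b\<in>UNIV - {p}. f p b else 0)"
proof -
  have "(\<Sum>b\<in>UNIV - {a}. if p = a \<and> q = a then f a b else 0) =
      (if a = p then (if p = q then \<Sum>b\<in>UNIV - {p}. f p b else 0) else 0)" for a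
    by auto
  then show ?thesis by simp
qed

lemma sum_offdiag_pairs_delta:
  fixes f :: "'n::finite \<Rightarrow> 'n \<Rightarrow> 'a::comm_monoid_add"
  shows "(\<Sum>a\<in>UNIV. \<Sum>b\<in>UNIV - {a}. if p = a \<and> q = b then f a b else 0) = (if p \<noteq> q then f p q else 0)"
proof -
  have "(\<Sum>b\<in>UNIV - {a}. if p = a \<and> q = b then f a b else 0) =
      (if a = p then (if p \<noteq> q then f p q else 0) else 0)" for a
    by (cases "a = p") (auto simp: sum.delta' if_distrib cong: if_cong)
  then show ?thesis by simp
qed

lemma balanced_symmetric_in_offdiag_span:
  fixes N :: "real^'n::finite^'n"
  assumes sym: "\<And>p q. N $ p $ q = N $ q $ p"
    and balanced: "\<And>p. N $ p $ p = (\<Sum>b\<in>UNIV - {p}. N $ p $ b)"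
  shows "N \<in> offdiag_span"
proof -
  define S where "S = (\<Sum>a\<in>UNIV. \<Sum>b\<in>UNIV - {a}. N $ a $ b *\<^sub>R outer (xi_pair a b) (xi_pair a b))"
  have "S \<in> offdiag_span"
    unfolding S_def offdiag_span_def by (intro span_sum span_scale span_base) auto
  moreover have "S $ p $ q = N $ p $ q" for p q
  proof -
    let ?t = "\<lambda>a b. (if p = a \<and> q = a then N $ a $ b else 0) + (if p = a \<and> q = b then N $ a $ b else 0)
      + (if p = b \<and> q = a then N $ a $ b else 0) + (if p = b \<and> q = b then N $ a $ b else 0)"
    have "S $ p $ q = (\<Sum>a\<in>UNIV. \<Sum>b\<in>UNIV - {a}. ?t a b) / 2"
      unfolding S_def by (simp add: outer_xi_pair_entry sum_divide_distrib) (intro sum.cong; auto)+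
    also have "\<dots> = ((if p = q then \<Sum>b\<in>UNIV - {p}. N $ p $ b else 0) + (if p \<noteq> q then N $ p $ q else 0)
        + (if p \<noteq> q then N $ q $ p else 0) + (if p = q then \<Sum>b\<in>UNIV - {p}. N $ b $ p else 0)) / 2"
      by (simp only: sum.distrib sum_offdiag_pairs_delta_diag sum_offdiag_pairs_delta
          sum_offdiag_pairs_swap[of "\<lambda>a b. if p = b \<and> q = a then N $ a $ b else 0"]
          sum_offdiag_pairs_swap[of "\<lambda>a b. if p = b \<and> q = b then N $ a $ b else 0"])
    also have "\<dots> = N $ p $ q"
      using sym balanced[of p] by auto
    finally show ?thesis .
  qed
  ultimately show ?thesis
    by (metis vec_eq_iff)
qed

definition diag_excess :: "real^'n::finite^'n \<Rightarrow> 'n \<Rightarrow> real" where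
  "diag_excess M p = M $ p $ p - (\<Sum>b\<in>UNIV - {p}. M $ p $ b)"

text \<open>Subtracting \<open>v \<otimes> e\<^sub>i + e\<^sub>i \<otimes> v\<close> lowers the excess of row \<open>p \<noteq> i\<close> by \<open>-v\<^sub>p\<close> and that of row \<open>i\<close>
  by \<open>2 v\<^sub>i - \<Sum>\<^sub>b\<^sub>\<noteq>\<^sub>i v\<^sub>b\<close>; this vector makes all excesses vanish.\<close>

definition correction :: "'n::finite \<Rightarrow> real^'n^'n \<Rightarrow> real^'n" where
  "correction i M = (\<chi> p. if p = i then (diag_excess M i - (\<Sum>b\<in>UNIV - {i}. diag_excess M b)) / 2
     else - diag_excess M p)"

definition offdiag_residual :: "'n::finite \<Rightarrow> real^'n^'n \<Rightarrow> real^'n^'n" where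
  "offdiag_residual i M = M - outer (correction i M) (axis i 1) - outer (axis i 1) (correction i M)"

lemma linear_correction: "linear (correction i)"
proof -
  have excess: "diag_excess (M + N) p = diag_excess M p + diag_excess N p"
    "diag_excess (c *\<^sub>R M) p = c * diag_excess M p" for M N c p
    unfolding diag_excess_def by (simp_all add: sum.distrib sum_distrib_left algebra_simps)
  show ?thesis
    by (intro linearI)
      (simp_all add: excess correction_def vec_eq_iff sum.distrib sum_distrib_left field_simps)
qed

lemma bounded_linear_correction: "bounded_linear (correction i)"
  using linear_correction linear_conv_bounded_linear by blast

lemma bounded_linear_offdiag_residual: "bounded_linear (offdiag_residual i)"
proof -
  have "linear (offdiag_residual i)"
    using linear_correction[of i]
    by (intro linearI) (simp_all add: offdiag_residual_def linear_add linear_scale outer_add_left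
        outer_add_right outer_scaleR_left outer_scaleR_right algebra_simps)
  then show ?thesis using linear_conv_bounded_linear by blast
qed

lemma offdiag_residual_entry:
  "offdiag_residual i M $ p $ q =
    M $ p $ q - correction i M $ p * (if q = i then 1 else 0) - (if p = i then 1 else 0) * correction i M $ q"
  unfolding offdiag_residual_def outer_def by (simp add: axis_def)

lemma offdiag_residual_balanced:
  "offdiag_residual i M $ p $ p = (\<Sum>b\<in>UNIV - {p}. offdiag_residual i M $ p $ b)"
proof (cases "p = i")
  case True
  have "(\<Sum>b\<in>UNIV - {i}. offdiag_residual i M $ i $ b) =
      (\<Sum>b\<in>UNIV - {i}. M $ i $ b) - (\<Sum>b\<in>UNIV - {i}. correction i M $ b)"
    by (simp add: offdiag_residual_entry sum_subtractf)
  moreover have "(\<Sum>b\<in>UNIV - {i}. correction i M $ b) = - (\<Sum>b\<in>UNIV - {i}. diag_excess M b)"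
    by (simp add: correction_def sum_negf[symmetric])
  ultimately show ?thesis
    using True by (simp add: offdiag_residual_entry correction_def diag_excess_def field_simps)
next
  case False
  have "(\<Sum>b\<in>UNIV - {p}. offdiag_residual i M $ p $ b) =
      (\<Sum>b\<in>UNIV - {p}. M $ p $ b - (if b = i then correction i M $ p else 0))"
    using False by (intro sum.cong) (auto simp: offdiag_residual_entry)
  also have "\<dots> = (\<Sum>b\<in>UNIV - {p}. M $ p $ b) - correction i M $ p"
    using False by (simp add: sum_subtractf sum.delta)
  finally show ?thesis
    using False by (simp add: offdiag_residual_entry correction_def diag_excess_def)
qed

lemma offdiag_residual_in_offdiag_span:
  assumes "is_sym M"
  shows "offdiag_residual i M \<in> offdiag_span"
proof (rule balanced_symmetric_in_offdiag_span)
  have "M $ p $ q = M $ q $ p" for p q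
    using assms unfolding is_sym_def transpose_def by (metis vec_lambda_beta)
  then show "offdiag_residual i M $ p $ q = offdiag_residual i M $ q $ p" for p q
    by (auto simp: offdiag_residual_entry)
qed (rule offdiag_residual_balanced)

lemma is_sym_add: "is_sym A \<Longrightarrow> is_sym B \<Longrightarrow> is_sym (A + B)"
  unfolding is_sym_def transpose_def by (simp add: vec_eq_iff)

lemma is_sym_scaleR: "is_sym A \<Longrightarrow> is_sym (c *\<^sub>R A)"
  unfolding is_sym_def transpose_def by (simp add: vec_eq_iff)

lemma is_sym_symm: "is_sym (symm A)"
  unfolding is_sym_def symm_def by (simp add: transpose_def vec_eq_iff algebra_simps)

lemma is_sym_offdiag_residual: "is_sym M \<Longrightarrow> is_sym (offdiag_residual i M)"
  unfolding is_sym_def offdiag_residual_def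
  by (simp add: transpose_outer transpose_def vec_eq_iff outer_def algebra_simps)

lemma linear_symm: "linear symm"
  by (rule linearI) (simp_all add: symm_def transpose_def vec_eq_iff algebra_simps)

definition symm_correction_column :: "'n::finite \<Rightarrow> 'n \<Rightarrow> real^'n^'n \<Rightarrow> real^'n^'n" where
  "symm_correction_column i q M = symm (outer (correction i M) (axis q 1))"

lemma bounded_linear_symm_correction_column: "bounded_linear (symm_correction_column i q)"
proof -
  have "linear (symm_correction_column i q)"
    by (rule linearI) (simp_all add: symm_correction_column_def linear_add[OF linear_correction]
        linear_scale[OF linear_correction] outer_add_left outer_scaleR_left
        linear_add[OF linear_symm] linear_scale[OF linear_symm])
  then show ?thesis using linear_conv_bounded_linear by blast
qed

lemma sum_symm_correction_column:
  "(\<Sum>q\<in>UNIV. symm_correction_column i q (F q)) = symm (\<chi> p q. correction i (F q) $ p)"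
proof -
  have "(\<Sum>q\<in>UNIV. outer (correction i (F q)) (axis q 1)) = (\<chi> p q. correction i (F q) $ p)"
    unfolding outer_def
    by (simp add: vec_eq_iff axis_def if_distrib[of "\<lambda>x. _ * x"] cong: if_cong)
  moreover have "(\<Sum>q\<in>UNIV. symm (outer (correction i (F q)) (axis q 1))) =
      symm (\<Sum>q\<in>UNIV. outer (correction i (F q)) (axis q 1))"
    by (rule linear_sum[OF linear_symm, symmetric])
  ultimately show ?thesis
    unfolding symm_correction_column_def by simp
qed

lemma grad_entry:
  fixes w :: "real^'n::finite \<Rightarrow> real^'n"
  assumes "partial_differentiable q w x"
  shows "grad w x $ p $ q = partial q w x $ p"
  unfolding grad_def using partial_linear(1)[OF bounded_linear_vec_nth assms] by simp

lemma grad_add_scaleR: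
  fixes w1 w2 :: "real^'n::finite \<Rightarrow> real^'n"
  assumes "\<And>q. partial_differentiable q w1 x" "\<And>q. partial_differentiable q w2 x"
  shows "grad (\<lambda>y. w1 y + c *\<^sub>R w2 y) x = grad w1 x + c *\<^sub>R grad w2 x"
proof -
  note scaled = partial_linear[OF bounded_linear_scaleR_right assms(2)]
  have "partial q (\<lambda>y. w1 y + c *\<^sub>R w2 y) x = partial q w1 x + c *\<^sub>R partial q w2 x"
    "partial_differentiable q (\<lambda>y. w1 y + c *\<^sub>R w2 y) x" for q
    using partial_add[OF assms(1) scaled(2)] scaled(1) by simp_all
  then show ?thesis
    using assms by (simp add: vec_eq_iff grad_entry)
qed

lemma grad_oscillating_scaleR:
  fixes v :: "real^'n::finite \<Rightarrow> real^'n"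
  assumes \<Phi>: "\<forall>k t. (deriv ^^ k) \<Phi> differentiable (at t)" "deriv \<Phi> = \<gamma>"
    and v: "\<And>q. partial_differentiable q v x" and "lam \<noteq> 0"
  shows "grad (\<lambda>y. (1 / lam) *\<^sub>R (\<Phi> (lam * (y \<bullet> axis i 1)) *\<^sub>R v y)) x =
    \<gamma> (lam * (x \<bullet> axis i 1)) *\<^sub>R outer (v x) (axis i 1) + (\<Phi> (lam * (x \<bullet> axis i 1)) / lam) *\<^sub>R grad v x"
proof -
  define \<phi> where "\<phi> y = \<Phi> (lam * (y \<bullet> axis i 1))" for y :: "real^'n"
  define w where "w y = (1 / lam) *\<^sub>R (\<phi> y *\<^sub>R v y)" for y
  have \<phi>: "partial q \<phi> x = (if q = i then lam * \<gamma> (lam * (x \<bullet> axis i 1)) else 0)"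
    "partial_differentiable q \<phi> x" for q
    using dpar_oscillating[OF \<Phi>(1), of "[q]"] \<Phi>(2)
      has_vector_derivative_oscillating_line[OF \<Phi>(1), of 1 0 lam x q i]
    unfolding \<phi>_def by (auto intro: partial_differentiableI)
  note product = partial_scaleR[OF \<phi>(2) v]
  note scaled = partial_linear[OF bounded_linear_scaleR_right[of "1 / lam"] product(2)]
  have w: "partial_differentiable q w x"
    "partial q w x = (1 / lam) *\<^sub>R (partial q \<phi> x *\<^sub>R v x + \<phi> x *\<^sub>R partial q v x)" for q
    unfolding w_def using scaled product(1) by simp_all
  have "grad w x = \<gamma> (lam * (x \<bullet> axis i 1)) *\<^sub>R outer (v x) (axis i 1) + (\<phi> x / lam) *\<^sub>R grad v x"
    using \<open>lam \<noteq> 0\<close>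
    by (simp add: vec_eq_iff grad_entry[OF w(1)] grad_entry[OF v] w(2) \<phi>(1) outer_def axis_def
        add_divide_distrib)
  then show ?thesis
    unfolding w_def \<phi>_def .
qed

lemma grad_correction:
  assumes "\<And>q. partial_differentiable q Q x"
  shows "grad (\<lambda>y. correction i (Q y)) x = (\<chi> p q. correction i (partial q Q x) $ p)"
proof -
  have "bounded_linear (\<lambda>M. correction i M $ p)" for p
    by (rule bounded_linear_compose[OF bounded_linear_vec_nth bounded_linear_correction])
  from partial_linear(1)[OF this assms]
  have "partial q (\<lambda>y. correction i (Q y) $ p) x = correction i (partial q Q x) $ p" for p q
    by simp
  then show ?thesis
    unfolding grad_def by simp
qed

lemma symm_split:
  fixes M A D :: "real^'n::finite^'n"
  assumes "mu \<noteq> 0" "lam \<noteq> 0"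
  shows "g *\<^sub>R M = 2 *\<^sub>R symm (g *\<^sub>R A + (f / lam) *\<^sub>R D) + (f * (mu / lam)) *\<^sub>R ((-2 / mu) *\<^sub>R symm D)
     + g *\<^sub>R (M - A - transpose A)"
  using assms unfolding symm_def transpose_def by (simp add: vec_eq_iff field_simps)

lemma oscillatory_correction_identity:
  fixes Q :: "real^'n::finite \<Rightarrow> real^'n^'n"
  assumes \<Phi>: "\<forall>k t. (deriv ^^ k) \<Phi> differentiable (at t)" "deriv \<Phi> = \<gamma>"
    and Q: "\<And>q. partial_differentiable q Q x" and "0 < mu" "0 < lam"
  shows "\<gamma> (lam * (x \<bullet> axis i 1)) *\<^sub>R Q x =
    2 *\<^sub>R symm (grad (\<lambda>y. (1 / lam) *\<^sub>R (\<Phi> (lam * (y \<bullet> axis i 1)) *\<^sub>R correction i (Q y))) x)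
    + (\<Phi> (lam * (x \<bullet> axis i 1)) * (mu / lam)) *\<^sub>R
        ((-2 / mu) *\<^sub>R symm (\<chi> p q. correction i (partial q Q x) $ p))
    + \<gamma> (lam * (x \<bullet> axis i 1)) *\<^sub>R offdiag_residual i (Q x)"
proof -
  have grad_w: "grad (\<lambda>y. (1 / lam) *\<^sub>R (\<Phi> (lam * (y \<bullet> axis i 1)) *\<^sub>R correction i (Q y))) x =
      \<gamma> (lam * (x \<bullet> axis i 1)) *\<^sub>R outer (correction i (Q x)) (axis i 1)
      + (\<Phi> (lam * (x \<bullet> axis i 1)) / lam) *\<^sub>R grad (\<lambda>y. correction i (Q y)) x"
    using partial_linear(2)[OF bounded_linear_correction Q] assms(5)
    by (intro grad_oscillating_scaleR[OF \<Phi>]) auto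
  have residual: "offdiag_residual i (Q x) =
      Q x - outer (correction i (Q x)) (axis i 1) - transpose (outer (correction i (Q x)) (axis i 1))"
    unfolding offdiag_residual_def transpose_outer ..
  show ?thesis
    unfolding grad_w grad_correction[OF Q] residual
    by (rule symm_split) (use assms(4,5) in auto)
qed

lemma oscillating_linear_image:
  fixes Q :: "real^'n::finite \<Rightarrow> 'a::real_normed_vector" and L :: "'a \<Rightarrow> 'b::real_normed_vector"
  assumes "open \<Omega>" "bounded_linear L" "0 \<le> mu" "mu \<le> lam" "0 \<le> K" "\<forall>m. 0 \<le> A m"
    and Q: "smooth_closure \<Omega> Q" "deriv_bounded \<Omega> Q (\<lambda>m. K * A m * mu ^ m)"
    and h: "\<forall>k t. (deriv ^^ k) h differentiable (at t)" "\<forall>k t. \<bar>(deriv ^^ k) h t\<bar> \<le> H k"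
  shows "smooth_closure \<Omega> (\<lambda>y. h (lam * (y \<bullet> axis i 1)) *\<^sub>R L (Q y))"
    and "deriv_bounded \<Omega> (\<lambda>y. h (lam * (y \<bullet> axis i 1)) *\<^sub>R L (Q y))
           (\<lambda>m. onorm L * leibniz_bound H A m * K * lam ^ m)"
proof -
  note osc = smooth_closure_oscillating[OF h(1), of \<Omega> lam i]
  note LQ = smooth_closure_linear[OF assms(1,2) Q(1)]
  show "smooth_closure \<Omega> (\<lambda>y. h (lam * (y \<bullet> axis i 1)) *\<^sub>R L (Q y))"
    by (rule smooth_closure_scaleR[OF assms(1) osc LQ])
  have "0 \<le> lam" using assms(3,4) by linarith
  then have "deriv_bounded \<Omega> (\<lambda>y. h (lam * (y \<bullet> axis i 1))) (\<lambda>m. 1 * lam ^ m * H m)"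
    using deriv_bounded_oscillating[OF h] by simp
  moreover have "deriv_bounded \<Omega> (\<lambda>y. L (Q y)) (\<lambda>m. (onorm L * K) * lam ^ m * A m)"
  proof (rule deriv_bounded_mono[OF deriv_bounded_linear[OF assms(1,2) smooth_closure_smooth_on[OF Q(1)] Q(2)]])
    fix m
    have "mu ^ m \<le> lam ^ m"
      by (rule power_mono[OF assms(4,3)])
    then have "(onorm L * K * A m) * mu ^ m \<le> (onorm L * K * A m) * lam ^ m"
      using onorm_pos_le[OF assms(2)] assms(5,6) by (intro mult_left_mono) auto
    then show "onorm L * (K * A m * mu ^ m) \<le> onorm L * K * lam ^ m * A m"
      by (simp add: algebra_simps)
  qed
  ultimately have "deriv_bounded \<Omega> (\<lambda>y. h (lam * (y \<bullet> axis i 1)) *\<^sub>R L (Q y))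
      (leibniz_bound (\<lambda>m. 1 * lam ^ m * H m) (\<lambda>m. (onorm L * K) * lam ^ m * A m))"
    by (rule deriv_bounded_scaleR[OF assms(1) osc[THEN smooth_closure_smooth_on] LQ[THEN smooth_closure_smooth_on]])
  then show "deriv_bounded \<Omega> (\<lambda>y. h (lam * (y \<bullet> axis i 1)) *\<^sub>R L (Q y))
      (\<lambda>m. onorm L * leibniz_bound H A m * K * lam ^ m)"
    unfolding leibniz_bound_scale by (simp add: algebra_simps)
qed

lemma symm_correction_gradient_extension:
  fixes Q :: "real^'n::finite \<Rightarrow> real^'n^'n"
  assumes "open \<Omega>" "0 < mu" "smooth_closure \<Omega> Q" "deriv_bounded \<Omega> Q (\<lambda>m. K * A m * mu ^ m)"
  obtains G where "smooth_closure \<Omega> G" "\<forall>x. is_sym (G x)"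
    "\<forall>x\<in>\<Omega>. G x = (-2 / mu) *\<^sub>R symm (\<chi> p q. correction i (partial q Q x) $ p)"
    "deriv_bounded \<Omega> G (\<lambda>m. 2 * (\<Sum>q\<in>UNIV. onorm (symm_correction_column i q)) * A (Suc m) * K * mu ^ m)"
proof -
  have "\<forall>q. \<exists>g. continuous_on (closure \<Omega>) g \<and> (\<forall>x\<in>\<Omega>. g x = partial q Q x)"
    using assms(3) unfolding smooth_closure_def by (metis dpar.simps)
  \<comment> \<open>On the boundary, \<open>partial q Q\<close> has junk values; its continuous extension \<open>E q\<close> makes \<open>G\<close> continuous
    up to the boundary.\<close>
  then obtain E where E: "\<And>q. continuous_on (closure \<Omega>) (E q)" "\<And>q x. x \<in> \<Omega> \<Longrightarrow> E q x = partial q Q x"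
    by metis
  have E_smooth: "smooth_closure \<Omega> (E q)" for q
    unfolding smooth_closure_iff
    using smooth_up_to_boundary_cong[OF assms(1) _ smooth_up_to_boundary_partial] assms(3) E
    by (metis smooth_closure_iff)
  have E_bound: "deriv_bounded \<Omega> (E q) (\<lambda>m. K * A (Suc m) * mu ^ Suc m)" for q
    unfolding deriv_bounded_def
  proof (intro allI ballI)
    fix ds x assume x: "x \<in> \<Omega>"
    have "dpar ds (E q) x = dpar (ds @ [q]) Q x"
      using dpar_cong[OF assms(1) x, of "E q" "partial q Q"] E(2) by simp
    then show "norm (dpar ds (E q) x) \<le> K * A (Suc (length ds)) * mu ^ Suc (length ds)"
      using deriv_boundedD[OF assms(4) x, of "ds @ [q]"] by simp
  qed
  define G where "G y = (-2 / mu) *\<^sub>R (\<Sum>q\<in>UNIV. symm_correction_column i q (E q y))" for y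
  have N_smooth: "smooth_closure \<Omega> (\<lambda>y. symm_correction_column i q (E q y))" for q
    by (rule smooth_closure_linear[OF assms(1) bounded_linear_symm_correction_column E_smooth])
  have "smooth_closure \<Omega> G"
    unfolding G_def using N_smooth
    by (intro smooth_closure_linear[OF assms(1) bounded_linear_scaleR_right] smooth_closure_sum[OF assms(1)]) auto
  moreover have "is_sym (G x)" for x
    unfolding G_def sum_symm_correction_column by (intro is_sym_scaleR is_sym_symm)
  moreover have "G x = (-2 / mu) *\<^sub>R symm (\<chi> p q. correction i (partial q Q x) $ p)" if "x \<in> \<Omega>" for x
    unfolding G_def sum_symm_correction_column using E(2)[OF that] by simp
  moreover have "deriv_bounded \<Omega> G (\<lambda>m. 2 * (\<Sum>q\<in>UNIV. onorm (symm_correction_column i q)) * A (Suc m) * K * mu ^ m)"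
  proof -
    have "deriv_bounded \<Omega> (\<lambda>y. \<Sum>q\<in>UNIV. symm_correction_column i q (E q y))
        (\<lambda>m. \<Sum>q\<in>UNIV. onorm (symm_correction_column i q) * (K * A (Suc m) * mu ^ Suc m))"
      using N_smooth E_smooth E_bound
      by (intro deriv_bounded_sum[OF assms(1)] ballI deriv_bounded_linear[OF assms(1) bounded_linear_symm_correction_column])
        (auto intro: smooth_closure_smooth_on)
    then have "deriv_bounded \<Omega> G (\<lambda>m. \<bar>-2 / mu\<bar> *
        (\<Sum>q\<in>UNIV. onorm (symm_correction_column i q) * (K * A (Suc m) * mu ^ Suc m)))"
      unfolding G_def using N_smooth
      by (intro deriv_bounded_scaleR_const[OF assms(1)] smooth_on_sum[OF assms(1)])
        (auto intro: smooth_closure_smooth_on)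
    then show ?thesis
      unfolding sum_distrib_right[symmetric] using assms(2) by (simp add: field_simps)
  qed
  ultimately show ?thesis using that by blast
qed

lemma oscillatory_correction_step:
  fixes Q :: "real^'n::finite \<Rightarrow> real^'n^'n" and i :: 'n
  assumes \<Omega>: "open \<Omega>" and scales: "1 \<le> mu" "mu \<le> lam" and K: "0 \<le> K" and A: "\<forall>m. 0 \<le> A m"
    and Q: "smooth_closure \<Omega> Q" "\<forall>x\<in>closure \<Omega>. is_sym (Q x)" "deriv_bounded \<Omega> Q (\<lambda>m. K * A m * mu ^ m)"
    and \<gamma>: "smooth_periodic \<gamma>" "\<forall>k t. \<bar>(deriv ^^ k) \<gamma> t\<bar> \<le> H\<gamma> k"
    and \<Phi>: "smooth_periodic \<Phi>" "deriv \<Phi> = \<gamma>" "\<forall>k t. \<bar>(deriv ^^ k) \<Phi> t\<bar> \<le> H\<Phi> k"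
  obtains w G R where "smooth_closure \<Omega> w" "smooth_closure \<Omega> G" "\<forall>x\<in>closure \<Omega>. is_sym (G x)"
    "smooth_closure \<Omega> R" "\<forall>x\<in>closure \<Omega>. is_sym (R x)"
    "\<forall>x\<in>\<Omega>. \<gamma> (lam * (x \<bullet> axis i 1)) *\<^sub>R Q x =
       2 *\<^sub>R symm (grad w x) + (\<Phi> (lam * (x \<bullet> axis i 1)) * (mu / lam)) *\<^sub>R G x + R x"
    "\<forall>x\<in>\<Omega>. R x \<in> offdiag_span"
    "deriv_bounded \<Omega> w (\<lambda>m. onorm (correction i) * leibniz_bound H\<Phi> A m * K * lam ^ m / lam)"
    "deriv_bounded \<Omega> G (\<lambda>m. 2 * (\<Sum>q\<in>UNIV. onorm (symm_correction_column i q)) * A (Suc m) * K * mu ^ m)"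
    "deriv_bounded \<Omega> R (\<lambda>m. onorm (offdiag_residual i) * leibniz_bound H\<gamma> A m * K * lam ^ m)"
proof -
  have "0 \<le> mu" "0 < mu" "0 < lam" using scales by linarith+
  obtain G where G: "smooth_closure \<Omega> G" "\<forall>x. is_sym (G x)"
    "\<forall>x\<in>\<Omega>. G x = (-2 / mu) *\<^sub>R symm (\<chi> p q. correction i (partial q Q x) $ p)"
    "deriv_bounded \<Omega> G (\<lambda>m. 2 * (\<Sum>q\<in>UNIV. onorm (symm_correction_column i q)) * A (Suc m) * K * mu ^ m)"
    by (rule symm_correction_gradient_extension[OF \<Omega> \<open>0 < mu\<close> Q(1) Q(3)])
  define w where "w y = (1 / lam) *\<^sub>R (\<Phi> (lam * (y \<bullet> axis i 1)) *\<^sub>R correction i (Q y))" for y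
  define R where "R y = \<gamma> (lam * (y \<bullet> axis i 1)) *\<^sub>R offdiag_residual i (Q y)" for y
  note W = oscillating_linear_image[OF \<Omega> bounded_linear_correction[of i] \<open>0 \<le> mu\<close> scales(2) K A Q(1,3)
      smooth_periodic_differentiable[OF \<Phi>(1)] \<Phi>(3), where i = i]
  note R_props = oscillating_linear_image[OF \<Omega> bounded_linear_offdiag_residual[of i] \<open>0 \<le> mu\<close> scales(2) K A
      Q(1,3) smooth_periodic_differentiable[OF \<gamma>(1)] \<gamma>(2), where i = i, folded R_def]
  have w_smooth: "smooth_closure \<Omega> w"
    unfolding w_def by (rule smooth_closure_linear[OF \<Omega> bounded_linear_scaleR_right W(1)])
  have w_bound: "deriv_bounded \<Omega> w (\<lambda>m. onorm (correction i) * leibniz_bound H\<Phi> A m * K * lam ^ m / lam)"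
    using deriv_bounded_scaleR_const[OF \<Omega> smooth_closure_smooth_on[OF W(1)] W(2), of "1 / lam"] \<open>0 < lam\<close>
    unfolding w_def by simp
  have R_sym: "\<forall>x\<in>closure \<Omega>. is_sym (R x)"
    using Q(2) unfolding R_def by (auto intro: is_sym_scaleR is_sym_offdiag_residual)
  have R_span: "\<forall>x\<in>\<Omega>. R x \<in> offdiag_span"
    using Q(2) closure_subset unfolding R_def offdiag_span_def
    by (auto intro!: span_mul offdiag_residual_in_offdiag_span[unfolded offdiag_span_def])
  have identity: "\<gamma> (lam * (x \<bullet> axis i 1)) *\<^sub>R Q x =
      2 *\<^sub>R symm (grad w x) + (\<Phi> (lam * (x \<bullet> axis i 1)) * (mu / lam)) *\<^sub>R G x + R x" if "x \<in> \<Omega>" for x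
    unfolding w_def R_def G(3)[rule_format, OF that]
    using smooth_on_partial_differentiable[OF smooth_closure_smooth_on[OF Q(1)] that] \<open>0 < mu\<close> \<open>0 < lam\<close>
    by (intro oscillatory_correction_identity[OF smooth_periodic_differentiable[OF \<Phi>(1)] \<Phi>(2)])
  show ?thesis
    using G(2) identity
    by (intro that[OF w_smooth G(1) _ R_props(1) R_sym _ R_span w_bound G(4) R_props(2)]) auto
qed

section \<open>Iterating the correction\<close>

definition oscillatory_decomposition ::
    "'n::finite \<Rightarrow> (real \<Rightarrow> real) \<Rightarrow> nat \<Rightarrow> (nat \<Rightarrow> real) \<Rightarrow> (real^'n) set \<Rightarrow> real \<Rightarrow> real \<Rightarrow> real \<Rightarrow>
      (real^'n \<Rightarrow> real^'n^'n) \<Rightarrow> bool" where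
  "oscillatory_decomposition i \<gamma> j C \<Omega> lam mu K Q \<longleftrightarrow>
     (\<exists>(w :: real^'n \<Rightarrow> real^'n) G R g.
        smooth_closure \<Omega> w \<and> smooth_closure \<Omega> G \<and> (\<forall>x\<in>closure \<Omega>. is_sym (G x)) \<and>
        smooth_closure \<Omega> R \<and> (\<forall>x\<in>closure \<Omega>. is_sym (R x)) \<and> smooth_periodic g \<and> zero_mean g \<and>
        (\<forall>x\<in>\<Omega>. \<gamma> (lam * (x \<bullet> axis i 1)) *\<^sub>R Q x =
           2 *\<^sub>R symm (grad w x) + (g (lam * (x \<bullet> axis i 1)) * (mu / lam) ^ j) *\<^sub>R G x + R x) \<and>
        (\<forall>x\<in>\<Omega>. R x \<in> offdiag_span) \<and>
        deriv_bounded \<Omega> w (\<lambda>m. C m * K * lam ^ m / lam) \<and>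
        deriv_bounded \<Omega> G (\<lambda>m. C m * K * mu ^ m) \<and>
        deriv_bounded \<Omega> R (\<lambda>m. C m * K * lam ^ m))"

lemma oscillatory_decomposition_Suc:
  fixes Q :: "real^'n::finite \<Rightarrow> real^'n^'n"
  assumes \<Omega>: "open \<Omega>" and scales: "1 \<le> mu" "mu \<le> lam" and K: "0 \<le> K"
    and C: "\<forall>m. 0 \<le> Cw m" "\<forall>m. 0 \<le> CR m"
    and w: "smooth_closure \<Omega> w" "deriv_bounded \<Omega> w (\<lambda>m. Cw m * K * lam ^ m / lam)"
    and R: "smooth_closure \<Omega> R" "\<forall>x\<in>closure \<Omega>. is_sym (R x)" "\<forall>x\<in>\<Omega>. R x \<in> offdiag_span"
      "deriv_bounded \<Omega> R (\<lambda>m. CR m * K * lam ^ m)"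
    and split: "\<forall>x\<in>\<Omega>. \<gamma> (lam * (x \<bullet> axis i 1)) *\<^sub>R Q x =
       2 *\<^sub>R symm (grad w x) + (\<Phi> (lam * (x \<bullet> axis i 1)) * (mu / lam)) *\<^sub>R G x + R x"
    and decomposition: "oscillatory_decomposition i \<Phi> j C' \<Omega> lam mu K G"
  shows "oscillatory_decomposition i \<gamma> (Suc j) (\<lambda>m. Cw m + CR m + C' m) \<Omega> lam mu K Q"
proof -
  obtain w' G' R' g where w': "smooth_closure \<Omega> w'" "deriv_bounded \<Omega> w' (\<lambda>m. C' m * K * lam ^ m / lam)"
    and G': "smooth_closure \<Omega> G'" "\<forall>x\<in>closure \<Omega>. is_sym (G' x)" "deriv_bounded \<Omega> G' (\<lambda>m. C' m * K * mu ^ m)"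
    and R': "smooth_closure \<Omega> R'" "\<forall>x\<in>closure \<Omega>. is_sym (R' x)" "\<forall>x\<in>\<Omega>. R' x \<in> offdiag_span"
      "deriv_bounded \<Omega> R' (\<lambda>m. C' m * K * lam ^ m)"
    and g: "smooth_periodic g" "zero_mean g"
    and split': "\<forall>x\<in>\<Omega>. \<Phi> (lam * (x \<bullet> axis i 1)) *\<^sub>R G x =
       2 *\<^sub>R symm (grad w' x) + (g (lam * (x \<bullet> axis i 1)) * (mu / lam) ^ j) *\<^sub>R G' x + R' x"
    using decomposition unfolding oscillatory_decomposition_def by blast
  define c where "c = mu / lam"
  have c: "0 \<le> c" "c \<le> 1" and lam: "0 < lam"
    unfolding c_def using scales by auto
  have smooth_on: "smooth_on \<Omega> w" "smooth_on \<Omega> w'" "smooth_on \<Omega> R" "smooth_on \<Omega> R'"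
    using w(1) w'(1) R(1) R'(1) by (simp_all add: smooth_closure_smooth_on)
  have "\<gamma> (lam * (x \<bullet> axis i 1)) *\<^sub>R Q x =
      2 *\<^sub>R symm (grad (\<lambda>y. w y + c *\<^sub>R w' y) x) + (g (lam * (x \<bullet> axis i 1)) * (mu / lam) ^ Suc j) *\<^sub>R G' x
      + (R x + c *\<^sub>R R' x)" if "x \<in> \<Omega>" for x
  proof -
    have "grad (\<lambda>y. w y + c *\<^sub>R w' y) x = grad w x + c *\<^sub>R grad w' x"
      using smooth_on(1,2) that by (intro grad_add_scaleR smooth_on_partial_differentiable)
    moreover have "\<gamma> (lam * (x \<bullet> axis i 1)) *\<^sub>R Q x =
        2 *\<^sub>R symm (grad w x) + c *\<^sub>R (\<Phi> (lam * (x \<bullet> axis i 1)) *\<^sub>R G x) + R x"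
      using split[rule_format, OF that] unfolding c_def by (simp add: mult.commute)
    ultimately show ?thesis
      using split'[rule_format, OF that] unfolding c_def[symmetric]
      by (simp add: linear_add[OF linear_symm] linear_scale[OF linear_symm] algebra_simps)
  qed
  moreover have "\<forall>x\<in>closure \<Omega>. is_sym (R x + c *\<^sub>R R' x)"
    using R(2) R'(2) by (blast intro: is_sym_add is_sym_scaleR)
  moreover have "\<forall>x\<in>\<Omega>. R x + c *\<^sub>R R' x \<in> offdiag_span"
    using R(3) R'(3) unfolding offdiag_span_def by (blast intro: span_add span_scale)
  moreover have "deriv_bounded \<Omega> (\<lambda>y. w y + c *\<^sub>R w' y) (\<lambda>m. (Cw m + CR m + C' m) * K * lam ^ m / lam)"
    using C K lam
    by (intro deriv_bounded_mono[OF deriv_bounded_add_scaleR[OF \<Omega> smooth_on(1,2) w(2) w'(2) c]])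
      (simp add: field_simps)
  moreover have "deriv_bounded \<Omega> G' (\<lambda>m. (Cw m + CR m + C' m) * K * mu ^ m)"
    using C K scales by (intro deriv_bounded_mono[OF G'(3)]) (simp add: mult_right_mono)
  moreover have "deriv_bounded \<Omega> (\<lambda>y. R y + c *\<^sub>R R' y) (\<lambda>m. (Cw m + CR m + C' m) * K * lam ^ m)"
    using C K lam
    by (intro deriv_bounded_mono[OF deriv_bounded_add_scaleR[OF \<Omega> smooth_on(3,4) R(4) R'(4) c]])
      (simp add: mult_right_mono algebra_simps)
  moreover have "smooth_closure \<Omega> (\<lambda>y. w y + c *\<^sub>R w' y)" "smooth_closure \<Omega> (\<lambda>y. R y + c *\<^sub>R R' y)"
    using w(1) w'(1) R(1) R'(1)
    by (auto intro!: smooth_closure_add[OF \<Omega>] smooth_closure_linear[OF \<Omega> bounded_linear_scaleR_right])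
  ultimately show ?thesis
    unfolding oscillatory_decomposition_def using G'(1,2) g by blast
qed

lemma oscillatory_decomposition_0:
  fixes Q :: "real^'n::finite \<Rightarrow> real^'n^'n"
  assumes "smooth_periodic \<gamma>" "zero_mean \<gamma>" "\<forall>m. 0 \<le> A m" and hyps: "1 \<le> mu" "mu \<le> lam" "0 \<le> K"
    "smooth_closure \<Omega> Q" "\<forall>x\<in>closure \<Omega>. is_sym (Q x)" "deriv_bounded \<Omega> Q (\<lambda>m. K * A m * mu ^ m)"
  shows "oscillatory_decomposition i \<gamma> 0 A \<Omega> lam mu K Q"
proof -
  have zero: "deriv_bounded \<Omega> (\<lambda>y. 0 :: real^'n) (\<lambda>m. A m * K * lam ^ m / lam)"
    "deriv_bounded \<Omega> (\<lambda>y. 0 :: real^'n^'n) (\<lambda>m. A m * K * lam ^ m)"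
    using hyps assms(3) by (auto intro!: deriv_bounded_zero)
  have grad_zero: "grad (\<lambda>y. 0 :: real^'n) x = 0" for x
    by (simp add: grad_def partial_const vec_eq_iff)
  show ?thesis
    unfolding oscillatory_decomposition_def
    by (rule exI[of _ "\<lambda>y. 0"], rule exI[of _ Q], rule exI[of _ "\<lambda>y. 0"], rule exI[of _ \<gamma>])
      (use assms zero grad_zero in \<open>auto simp: smooth_closure_const symm_def is_sym_def
        transpose_def offdiag_span_def span_zero zero_vec_def[symmetric] mult.commute mult.left_commute\<close>)
qed

lemma oscillatory_decomposition_exists:
  fixes i :: "'n::finite"
  assumes "smooth_periodic \<gamma>" "zero_mean \<gamma>" "\<forall>m. 0 \<le> A m"
  obtains C where "\<forall>m. 0 \<le> C m"
    "\<And>\<Omega> lam mu K (Q :: real^'n \<Rightarrow> real^'n^'n). open \<Omega> \<Longrightarrow> 1 \<le> mu \<Longrightarrow> mu \<le> lam \<Longrightarrow> 0 \<le> K \<Longrightarrow>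
       smooth_closure \<Omega> Q \<Longrightarrow> \<forall>x\<in>closure \<Omega>. is_sym (Q x) \<Longrightarrow>
       deriv_bounded \<Omega> Q (\<lambda>m. K * A m * mu ^ m) \<Longrightarrow> oscillatory_decomposition i \<gamma> j C \<Omega> lam mu K Q"
  using assms
proof (induction j arbitrary: \<gamma> A thesis)
  case 0
  show ?case
    by (rule "0.prems"(1)[OF "0.prems"(4)], rule oscillatory_decomposition_0[OF "0.prems"(2-4)])
next
  case (Suc j)
  obtain \<Phi> where \<Phi>: "smooth_periodic \<Phi>" "zero_mean \<Phi>" "\<forall>t. (\<Phi> has_real_derivative \<gamma> t) (at t)"
    using smooth_periodic_antiderivative[OF Suc.prems(2,3)] by blast
  have "deriv \<Phi> = \<gamma>"
    using \<Phi>(3) DERIV_imp_deriv by blast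
  obtain H\<Phi> H\<gamma> where H\<Phi>: "\<forall>k t. \<bar>(deriv ^^ k) \<Phi> t\<bar> \<le> H\<Phi> k" and H\<gamma>: "\<forall>k t. \<bar>(deriv ^^ k) \<gamma> t\<bar> \<le> H\<gamma> k"
    using smooth_periodic_iterated_deriv_bounded \<Phi>(1) Suc.prems(2) by metis
  then have H_nonneg: "0 \<le> H\<Phi> k" "0 \<le> H\<gamma> k" for k
    by (meson abs_ge_zero order_trans)+
  define A' where "A' m = 2 * (\<Sum>q\<in>UNIV. onorm (symm_correction_column i q)) * A (Suc m)" for m
  have "\<forall>m. 0 \<le> A' m"
    unfolding A'_def using Suc.prems(4)
    by (auto intro!: mult_nonneg_nonneg sum_nonneg onorm_pos_le bounded_linear_symm_correction_column)
  then obtain C' where C': "\<forall>m. 0 \<le> C' m"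
    "\<And>\<Omega> lam mu K (Q :: real^'n \<Rightarrow> real^'n^'n). open \<Omega> \<Longrightarrow> 1 \<le> mu \<Longrightarrow> mu \<le> lam \<Longrightarrow> 0 \<le> K \<Longrightarrow>
       smooth_closure \<Omega> Q \<Longrightarrow> \<forall>x\<in>closure \<Omega>. is_sym (Q x) \<Longrightarrow>
       deriv_bounded \<Omega> Q (\<lambda>m. K * A' m * mu ^ m) \<Longrightarrow> oscillatory_decomposition i \<Phi> j C' \<Omega> lam mu K Q"
    using Suc.IH[OF _ \<Phi>(1,2)] by blast
  define Cw where "Cw m = onorm (correction i) * leibniz_bound H\<Phi> A m" for m
  define CR where "CR m = onorm (offdiag_residual i) * leibniz_bound H\<gamma> A m" for m
  have C_nonneg: "\<forall>m. 0 \<le> Cw m" "\<forall>m. 0 \<le> CR m"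
    unfolding Cw_def CR_def using Suc.prems(4) H_nonneg
    by (auto intro!: mult_nonneg_nonneg onorm_pos_le bounded_linear_correction
        bounded_linear_offdiag_residual leibniz_bound_nonneg)
  show ?case
  proof (rule Suc.prems(1))
    show "\<forall>m. 0 \<le> Cw m + CR m + C' m"
      using C_nonneg C'(1) by (simp add: add_nonneg_nonneg)
    fix \<Omega> lam mu K and Q :: "real^'n \<Rightarrow> real^'n^'n"
    assume hyps: "open \<Omega>" "1 \<le> mu" "mu \<le> lam" "0 \<le> K" "smooth_closure \<Omega> Q"
      "\<forall>x\<in>closure \<Omega>. is_sym (Q x)" "deriv_bounded \<Omega> Q (\<lambda>m. K * A m * mu ^ m)"
    obtain w G R where step: "smooth_closure \<Omega> w" "smooth_closure \<Omega> G" "\<forall>x\<in>closure \<Omega>. is_sym (G x)"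
      "smooth_closure \<Omega> R" "\<forall>x\<in>closure \<Omega>. is_sym (R x)"
      "\<forall>x\<in>\<Omega>. \<gamma> (lam * (x \<bullet> axis i 1)) *\<^sub>R Q x =
         2 *\<^sub>R symm (grad w x) + (\<Phi> (lam * (x \<bullet> axis i 1)) * (mu / lam)) *\<^sub>R G x + R x"
      "\<forall>x\<in>\<Omega>. R x \<in> offdiag_span"
      "deriv_bounded \<Omega> w (\<lambda>m. Cw m * K * lam ^ m / lam)"
      "deriv_bounded \<Omega> G (\<lambda>m. A' m * K * mu ^ m)"
      "deriv_bounded \<Omega> R (\<lambda>m. CR m * K * lam ^ m)"
      unfolding Cw_def CR_def A'_def
      by (rule oscillatory_correction_step[OF hyps(1-4) Suc.prems(4) hyps(5-7) Suc.prems(2) H\<gamma>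
            \<Phi>(1) \<open>deriv \<Phi> = \<gamma>\<close> H\<Phi>])
    have "deriv_bounded \<Omega> G (\<lambda>m. K * A' m * mu ^ m)"
      using step(9) by (simp add: mult.commute)
    then have "oscillatory_decomposition i \<Phi> j C' \<Omega> lam mu K G"
      by (rule C'(2)[OF hyps(1-4) step(2,3)])
    then show "oscillatory_decomposition i \<gamma> (Suc j) (\<lambda>m. Cw m + CR m + C' m) \<Omega> lam mu K Q"
      by (rule oscillatory_decomposition_Suc[OF hyps(1-4) C_nonneg step(1,8,4,5,7,10,6)])
  qed
qed

section \<open>Symmetry of mixed partial derivatives\<close>

lemma has_vector_derivative_axis_line:
  fixes z :: "real^'n::finite"
  assumes "partial_differentiable c F (z + s *\<^sub>R axis c 1)"
  shows "((\<lambda>t. F (z + t *\<^sub>R axis c 1)) has_vector_derivative partial c F (z + s *\<^sub>R axis c 1)) (at s)"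
proof -
  let ?y = "z + s *\<^sub>R axis c 1"
  have "((\<lambda>t. F (?y + t *\<^sub>R axis c 1)) \<circ> (\<lambda>t. t - s) has_vector_derivative 1 *\<^sub>R partial c F ?y) (at s)"
    using has_vector_derivative_partial[OF assms]
    by (intro vector_diff_chain_at) (auto intro!: derivative_eq_intros)
  moreover have "(\<lambda>t. F (?y + t *\<^sub>R axis c 1)) \<circ> (\<lambda>t. t - s) = (\<lambda>t. F (z + t *\<^sub>R axis c 1))"
    by (auto simp: algebra_simps)
  ultimately show ?thesis by simp
qed

lemma norm_increment_linearization_le:
  fixes f :: "real \<Rightarrow> 'b::real_normed_vector"
  assumes "0 \<le> h" "\<And>t. t \<in> {0..h} \<Longrightarrow> (f has_vector_derivative f' t) (at t)"
    and "\<And>t. t \<in> {0..h} \<Longrightarrow> norm (f' t - D) \<le> B"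
  shows "norm (f h - f 0 - h *\<^sub>R D) \<le> h * B"
proof -
  have "norm ((f h - h *\<^sub>R D) - (f 0 - 0 *\<^sub>R D)) \<le> B * norm (h - 0)"
  proof (rule differentiable_bound[where f' = "\<lambda>t s. s *\<^sub>R (f' t - D)"])
    fix t assume "t \<in> {0..h}"
    then have "(f has_derivative (\<lambda>s. s *\<^sub>R f' t)) (at t within {0..h})"
      using assms(2) has_vector_derivative_at_within unfolding has_vector_derivative_def by blast
    then show "((\<lambda>t. f t - t *\<^sub>R D) has_derivative (\<lambda>s. s *\<^sub>R (f' t - D))) (at t within {0..h})"
      by (auto intro!: derivative_eq_intros simp: scaleR_diff_right)
    show "onorm (\<lambda>s. s *\<^sub>R (f' t - D)) \<le> B"
      using onorm_scaleR_left[OF bounded_linear_ident, of "f' t - D"] assms(3)[OF \<open>t \<in> {0..h}\<close>]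
      by (simp add: onorm_id)
  qed (use assms(1) in auto)
  then show ?thesis using assms(1) by (simp add: algebra_simps)
qed

lemma second_difference_approximation:
  fixes F :: "real^'n::finite \<Rightarrow> 'b::real_normed_vector" and x :: "real^'n"
  assumes pd: "\<forall>y\<in>ball x r. partial_differentiable a F y \<and> partial_differentiable b F y \<and>
      partial_differentiable b (partial a F) y"
    and near: "\<forall>y\<in>ball x r. norm (partial b (partial a F) y - partial b (partial a F) x) \<le> \<epsilon>"
    and h: "0 < h" "2 * h < r"
  shows "norm ((F (x + h *\<^sub>R axis a 1 + h *\<^sub>R axis b 1) - F (x + h *\<^sub>R axis a 1) - F (x + h *\<^sub>R axis b 1) + F x)
     - (h * h) *\<^sub>R partial b (partial a F) x) \<le> h * (h * \<epsilon>)"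
proof -
  define P where "P s t = x + s *\<^sub>R axis a 1 + t *\<^sub>R axis b 1" for s t
  let ?D = "partial b (partial a F) x"
  have P_ball: "P s t \<in> ball x r" if "s \<in> {0..h}" "t \<in> {0..h}" for s t
  proof -
    have "norm (s *\<^sub>R axis a (1::real) + t *\<^sub>R axis b 1) \<le> \<bar>s\<bar> + \<bar>t\<bar>"
      using norm_triangle_ineq[of "s *\<^sub>R axis a (1::real)" "t *\<^sub>R axis b 1"] by simp
    moreover have "dist x (P s t) = norm (s *\<^sub>R axis a (1::real) + t *\<^sub>R axis b 1)"
      unfolding P_def dist_norm by (simp add: norm_minus_commute add.commute)
    ultimately show ?thesis
      using that h by simp
  qed
  have inner: "norm (partial a F (P s h) - partial a F (P s 0) - h *\<^sub>R ?D) \<le> h * \<epsilon>" if s: "s \<in> {0..h}" for s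
  proof (rule norm_increment_linearization_le[where f = "\<lambda>t. partial a F (P s t)"])
    fix t :: real assume t: "t \<in> {0..h}"
    have "P s t = (x + s *\<^sub>R axis a 1) + t *\<^sub>R axis b 1" for t unfolding P_def by simp
    then show "((\<lambda>t. partial a F (P s t)) has_vector_derivative partial b (partial a F) (P s t)) (at t)"
      using has_vector_derivative_axis_line[of b "partial a F" "x + s *\<^sub>R axis a 1" t] pd P_ball[OF s t]
      by simp
    show "norm (partial b (partial a F) (P s t) - ?D) \<le> \<epsilon>"
      using near P_ball[OF s t] by blast
  qed (use h in auto)
  have "norm ((F (P h h) - F (P h 0)) - (F (P 0 h) - F (P 0 0)) - h *\<^sub>R (h *\<^sub>R ?D)) \<le> h * (h * \<epsilon>)"
  proof (rule norm_increment_linearization_le[where f = "\<lambda>s. F (P s h) - F (P s 0)"])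
    fix s :: real assume s: "s \<in> {0..h}"
    have line: "P s t = (x + t *\<^sub>R axis b 1) + s *\<^sub>R axis a 1" for s t
      unfolding P_def by (simp add: algebra_simps)
    have "((\<lambda>s. F (P s t)) has_vector_derivative partial a F (P s t)) (at s)" if "t \<in> {0..h}" for t
      using has_vector_derivative_axis_line[of a F "x + t *\<^sub>R axis b 1" s] pd P_ball[OF s that]
      unfolding line by simp
    then show "((\<lambda>s. F (P s h) - F (P s 0)) has_vector_derivative
        partial a F (P s h) - partial a F (P s 0)) (at s)"
      using h by (intro has_vector_derivative_diff) auto
  qed (use h inner in auto)
  then show ?thesis
    unfolding P_def by (simp add: algebra_simps)
qed

lemma partial_commute:
  fixes F :: "real^'n::finite \<Rightarrow> 'b::real_normed_vector"
  assumes "open \<Omega>" "x \<in> \<Omega>"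
    and pd: "\<forall>y\<in>\<Omega>. partial_differentiable a F y \<and> partial_differentiable b F y \<and>
      partial_differentiable b (partial a F) y \<and> partial_differentiable a (partial b F) y"
    and "continuous_on \<Omega> (partial b (partial a F))" "continuous_on \<Omega> (partial a (partial b F))"
  shows "partial b (partial a F) x = partial a (partial b F) x"
proof -
  let ?Dab = "partial b (partial a F)" and ?Dba = "partial a (partial b F)"
  have close: "norm (?Dab x - ?Dba x) \<le> 2 * \<epsilon>" if "\<epsilon> > 0" for \<epsilon>
  proof -
    obtain r0 where r0: "0 < r0" "ball x r0 \<subseteq> \<Omega>"
      using assms(1,2) open_contains_ball by blast
    have "isCont ?Dab x" "isCont ?Dba x"
      using assms continuous_on_eq_continuous_at by blast+
    then obtain d1 d2 where d: "0 < d1" "\<forall>y. dist y x < d1 \<longrightarrow> dist (?Dab y) (?Dab x) < \<epsilon>"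
      "0 < d2" "\<forall>y. dist y x < d2 \<longrightarrow> dist (?Dba y) (?Dba x) < \<epsilon>"
      using \<open>\<epsilon> > 0\<close> unfolding continuous_at_eps_delta by blast
    define r where "r = min r0 (min d1 d2)"
    have r: "0 < r" "ball x r \<subseteq> \<Omega>"
      using r0 d unfolding r_def by auto
    have near: "\<forall>y\<in>ball x r. norm (?Dab y - ?Dab x) \<le> \<epsilon>" "\<forall>y\<in>ball x r. norm (?Dba y - ?Dba x) \<le> \<epsilon>"
      using d(2,4) unfolding r_def by (auto simp: dist_norm norm_minus_commute less_imp_le)
    define h where "h = r / 3"
    have h: "0 < h" "2 * h < r" using r(1) unfolding h_def by auto
    let ?\<Delta> = "F (x + h *\<^sub>R axis a 1 + h *\<^sub>R axis b 1) - F (x + h *\<^sub>R axis a 1) - F (x + h *\<^sub>R axis b 1) + F x"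
    have pd_ball: "\<forall>y\<in>ball x r. partial_differentiable a F y \<and> partial_differentiable b F y \<and>
        partial_differentiable b (partial a F) y \<and> partial_differentiable a (partial b F) y"
      using pd r(2) by blast
    have A: "norm (?\<Delta> - (h * h) *\<^sub>R ?Dab x) \<le> h * (h * \<epsilon>)"
      by (rule second_difference_approximation[OF _ near(1) h]) (use pd_ball in blast)
    have "norm ((F (x + h *\<^sub>R axis b 1 + h *\<^sub>R axis a 1) - F (x + h *\<^sub>R axis b 1) - F (x + h *\<^sub>R axis a 1) + F x)
        - (h * h) *\<^sub>R ?Dba x) \<le> h * (h * \<epsilon>)"
      by (rule second_difference_approximation[OF _ near(2) h]) (use pd_ball in blast)
    then have B: "norm (?\<Delta> - (h * h) *\<^sub>R ?Dba x) \<le> h * (h * \<epsilon>)"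
      by (simp add: algebra_simps)
    have "norm ((h * h) *\<^sub>R (?Dab x - ?Dba x)) \<le> norm (?\<Delta> - (h * h) *\<^sub>R ?Dba x) + norm (?\<Delta> - (h * h) *\<^sub>R ?Dab x)"
      using norm_triangle_ineq4[of "?\<Delta> - (h * h) *\<^sub>R ?Dba x" "?\<Delta> - (h * h) *\<^sub>R ?Dab x"]
      by (simp add: algebra_simps)
    also have "\<dots> \<le> (h * h) * (2 * \<epsilon>)"
      using A B by simp
    finally show ?thesis
      using h by (simp add: mult_le_cancel_left_pos)
  qed
  have "norm (?Dab x - ?Dba x) \<le> 0"
  proof (rule field_le_epsilon)
    fix e :: real assume "0 < e"
    then show "norm (?Dab x - ?Dba x) \<le> 0 + e"
      using close[of "e / 2"] by simp
  qed
  then show ?thesis by simp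
qed

lemma dpar_swap:
  assumes "open \<Omega>" "smooth_on \<Omega> f" "x \<in> \<Omega>"
  shows "dpar (b # a # ds) f x = dpar (a # b # ds) f x"
proof -
  have "\<forall>y\<in>\<Omega>. partial_differentiable a (dpar ds f) y \<and> partial_differentiable b (dpar ds f) y \<and>
      partial_differentiable b (partial a (dpar ds f)) y \<and> partial_differentiable a (partial b (dpar ds f)) y"
    using smooth_on_partial_differentiable_dpar[OF assms(2), of _ _ ds]
      smooth_on_partial_differentiable_dpar[OF assms(2), of _ _ "a # ds"]
      smooth_on_partial_differentiable_dpar[OF assms(2), of _ _ "b # ds"] by simp
  with smooth_on_continuous_on_dpar[OF assms(2), of "b # a # ds"]
    smooth_on_continuous_on_dpar[OF assms(2), of "a # b # ds"]
  show ?thesis using partial_commute[OF assms(1,3)] by simp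
qed

lemma dpar_partial_commute:
  assumes "open \<Omega>" "smooth_on \<Omega> f" "x \<in> \<Omega>"
  shows "dpar ds (partial d f) x = partial d (dpar ds f) x"
  using assms(3)
proof (induction ds arbitrary: x)
  case (Cons e ds)
  then have "dpar (e # ds) (partial d f) x = partial e (partial d (dpar ds f)) x"
    using partial_cong[OF assms(1) Cons.prems, of "dpar ds (partial d f)"] by simp
  then show ?case
    using dpar_swap[OF assms(1,2) Cons.prems, of e d ds] by simp
qed simp

lemma dpar_perm:
  assumes "open \<Omega>" "smooth_on \<Omega> f" "mset ds' = mset ds" "x \<in> \<Omega>"
  shows "dpar ds' f x = dpar ds f x"
  using assms(3,4)
proof (induction ds arbitrary: ds' x)
  case Nil
  then show ?case by simp
next
  case (Cons d ds)
  obtain ys zs where ds': "ds' = ys @ d # zs"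
    using Cons.prems(1) by (metis list.set_intros(1) set_mset_mset split_list)
  have "dpar ds' f x = partial d (dpar ys (dpar zs f)) x"
    unfolding ds' using dpar_partial_commute[OF assms(1) smooth_on_dpar[OF assms(2)] Cons.prems(2)] by simp
  also have "\<dots> = partial d (dpar ds f) x"
    using Cons.IH[of "ys @ zs"] Cons.prems(1) ds' by (intro partial_cong[OF assms(1) Cons.prems(2)]) simp
  finally show ?case by simp
qed

lemma dmulti_mset:
  assumes "open \<Omega>" "smooth_on \<Omega> f" "x \<in> \<Omega>"
  shows "dmulti (mset ds) f x = dpar ds f x"
proof -
  have "mset (SOME ds'. mset ds' = mset ds) = mset ds"
    by (rule someI_ex) auto
  then show ?thesis
    unfolding dmulti_def using dpar_perm[OF assms(1,2) _ assms(3)] by blast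
qed

lemma dmulti_obtain_dpar:
  obtains ds where "dmulti \<beta> f = dpar ds f" "length ds = size \<beta>"
proof -
  have "mset (SOME ds'. mset ds' = \<beta>) = \<beta>"
    by (rule someI_ex) (rule ex_mset)
  then show ?thesis
    using that unfolding dmulti_def by (metis size_mset)
qed

lemma finite_size_multisets: "finite {\<beta>::'n::finite multiset. size \<beta> = m}"
proof -
  have "{\<beta>::'n multiset. size \<beta> = m} = multisets_of_size UNIV m"
    unfolding multisets_of_size_def by auto
  then show ?thesis
    using finite_multisets_of_size[of "UNIV :: 'n set" m] by simp
qed

lemma smooth_up_to_boundary_bdd_above:
  assumes "smooth_up_to_boundary \<Omega> f" "bounded \<Omega>"
  shows "bdd_above ((\<lambda>x. norm (dmulti \<beta> f x)) ` \<Omega>)"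
proof -
  obtain ds where ds: "dmulti \<beta> f = dpar ds f"
    by (rule dmulti_obtain_dpar)
  obtain g where g: "continuous_on (closure \<Omega>) g" "\<forall>x\<in>\<Omega>. g x = dpar ds f x"
    using smooth_up_to_boundary_extends_continuously[OF assms(1)] unfolding extends_continuously_def by blast
  have "compact (g ` closure \<Omega>)"
    using g(1) assms(2) by (intro compact_continuous_image) auto
  then obtain B where "\<forall>y\<in>g ` closure \<Omega>. norm y \<le> B"
    using compact_imp_bounded bounded_iff by metis
  then have "norm (dmulti \<beta> f x) \<le> B" if "x \<in> \<Omega>" for x
    using g(2) that closure_subset unfolding ds by fastforce
  then show ?thesis by (rule bdd_aboveI2)
qed

lemma norm_dmulti_le_Ck_norm:
  assumes "smooth_up_to_boundary \<Omega> f" "bounded \<Omega>" "x \<in> \<Omega>"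
  shows "norm (dmulti \<beta> f x) \<le> Ck_norm \<Omega> (size \<beta>) f"
proof -
  let ?S = "\<lambda>\<beta>. SUP x\<in>\<Omega>. norm (dmulti \<beta> f x)"
  note bdd = smooth_up_to_boundary_bdd_above[OF assms(1,2)]
  have S_nonneg: "0 \<le> ?S \<beta>'" for \<beta>'
    using cSUP_upper[OF assms(3) bdd] norm_ge_zero order_trans by blast
  have "norm (dmulti \<beta> f x) \<le> ?S \<beta>"
    by (rule cSUP_upper[OF assms(3) bdd])
  also have "\<dots> \<le> (\<Sum>\<beta>'\<in>{\<beta>'. size \<beta>' = size \<beta>}. ?S \<beta>')"
    by (rule member_le_sum) (auto simp: S_nonneg finite_size_multisets)
  also have "\<dots> \<le> (\<Sum>m\<le>size \<beta>. \<Sum>\<beta>'\<in>{\<beta>'. size \<beta>' = m}. ?S \<beta>')"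
    by (rule member_le_sum[of "size \<beta>"]) (auto intro!: sum_nonneg simp: S_nonneg)
  finally show ?thesis
    unfolding Ck_norm_def .
qed

lemma deriv_bounded_of_Ck_norm:
  assumes "open \<Omega>" "bounded \<Omega>" "smooth_up_to_boundary \<Omega> f" "\<forall>k. Ck_norm \<Omega> k f \<le> B k"
  shows "deriv_bounded \<Omega> f B"
  unfolding deriv_bounded_def
proof (intro allI ballI)
  fix ds x assume x: "x \<in> \<Omega>"
  have "norm (dpar ds f x) = norm (dmulti (mset ds) f x)"
    using dmulti_mset[OF assms(1) smooth_up_to_boundary_smooth_on[OF assms(3)] x] by simp
  also have "\<dots> \<le> Ck_norm \<Omega> (length ds) f"
    using norm_dmulti_le_Ck_norm[OF assms(3,2) x, of "mset ds"] by simp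
  finally show "norm (dpar ds f x) \<le> B (length ds)"
    using assms(4) by (meson order_trans)
qed

lemma Ck_norm_le_of_deriv_bounded:
  fixes f :: "real^'n::finite \<Rightarrow> 'b::real_normed_vector"
  assumes "\<Omega> \<noteq> {}" "deriv_bounded \<Omega> f B"
  shows "Ck_norm \<Omega> k f \<le> (\<Sum>m\<le>k. real (card {\<beta>::'n multiset. size \<beta> = m}) * B m)"
  unfolding Ck_norm_def
proof (rule sum_mono)
  fix m
  have "(SUP x\<in>\<Omega>. norm (dmulti \<beta> f x)) \<le> B m" if "size \<beta> = m" for \<beta> :: "'n multiset"
  proof -
    obtain ds where "dmulti \<beta> f = dpar ds f" "length ds = size \<beta>"
      by (rule dmulti_obtain_dpar)
    then show ?thesis
      using assms that by (intro cSUP_least) (auto dest: deriv_boundedD)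
  qed
  then show "(\<Sum>\<beta>\<in>{\<beta>. size \<beta> = m}. SUP x\<in>\<Omega>. norm (dmulti \<beta> f x)) \<le>
      real (card {\<beta>::'n multiset. size \<beta> = m}) * B m"
    using sum_mono[of "{\<beta>::'n multiset. size \<beta> = m}" "\<lambda>\<beta>. SUP x\<in>\<Omega>. norm (dmulti \<beta> f x)" "\<lambda>_. B m"]
    by simp
qed

lemma Ck_norm_le_power:
  fixes f :: "real^'n::finite \<Rightarrow> 'b::real_normed_vector"
  assumes "\<Omega> \<noteq> {}" "deriv_bounded \<Omega> f (\<lambda>m. C m * K * s ^ m * t)"
    and "1 \<le> s" "0 \<le> t" "0 \<le> K" "\<forall>m. 0 \<le> C m"
    and "(\<Sum>m\<le>k. real (card {\<beta>::'n multiset. size \<beta> = m}) * C m) \<le> C'"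
  shows "Ck_norm \<Omega> k f \<le> C' * (K * s ^ k * t)"
proof -
  have "Ck_norm \<Omega> k f \<le> (\<Sum>m\<le>k. real (card {\<beta>::'n multiset. size \<beta> = m}) * (C m * K * s ^ m * t))"
    by (rule Ck_norm_le_of_deriv_bounded[OF assms(1,2)])
  also have "\<dots> \<le> (\<Sum>m\<le>k. real (card {\<beta>::'n multiset. size \<beta> = m}) * C m * (K * s ^ k * t))"
  proof (rule sum_mono)
    fix m assume "m \<in> {..k}"
    then have "s ^ m \<le> s ^ k"
      using assms(3) by (intro power_increasing) auto
    then have "(real (card {\<beta>::'n multiset. size \<beta> = m}) * C m * K * t) * s ^ m \<le>
        (real (card {\<beta>::'n multiset. size \<beta> = m}) * C m * K * t) * s ^ k"
      using assms(4-6) by (intro mult_left_mono) auto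
    then show "real (card {\<beta>::'n multiset. size \<beta> = m}) * (C m * K * s ^ m * t) \<le>
        real (card {\<beta>::'n multiset. size \<beta> = m}) * C m * (K * s ^ k * t)"
      by (simp add: algebra_simps)
  qed
  also have "\<dots> \<le> C' * (K * s ^ k * t)"
    unfolding sum_distrib_right[symmetric] using assms(3-5,7) by (intro mult_right_mono) auto
  finally show ?thesis .
qed

lemma oscillatory_decomposition_Ck_bounds:
  fixes Q :: "real^'n::finite \<Rightarrow> real^'n^'n"
  assumes decomposition: "oscillatory_decomposition i \<gamma> j C \<Omega> lam mu K Q"
    and "\<Omega> \<noteq> {}" "1 \<le> mu" "mu \<le> lam" "0 \<le> K" "\<forall>m. 0 \<le> C m"
    and C': "\<And>k. (\<Sum>m\<le>k. real (card {\<beta>::'n multiset. size \<beta> = m}) * C m) \<le> C' k"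
  shows "\<exists>(w :: real^'n \<Rightarrow> real^'n) (G :: real^'n \<Rightarrow> real^'n^'n) (R :: real^'n \<Rightarrow> real^'n^'n) (gj :: real \<Rightarrow> real).
        smooth_closure \<Omega> w \<and>
        smooth_closure \<Omega> G \<and> (\<forall>x\<in>closure \<Omega>. is_sym (G x)) \<and>
        smooth_closure \<Omega> R \<and> (\<forall>x\<in>closure \<Omega>. is_sym (R x)) \<and>
        smooth_periodic gj \<and> zero_mean gj \<and>
        (\<forall>x\<in>\<Omega>. \<gamma> (lam * (x \<bullet> axis i 1)) *\<^sub>R Q x =
            2 *\<^sub>R symm (grad w x) + (gj (lam * (x \<bullet> axis i 1)) * (mu / lam) ^ j) *\<^sub>R G x + R x) \<and>
        (\<forall>x\<in>\<Omega>. R x \<in> offdiag_span) \<and>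
        (\<forall>k. Ck_norm \<Omega> k w \<le> C' k * K * lam powr (real k - 1) \<and>
             Ck_norm \<Omega> k G \<le> C' k * K * mu ^ k \<and>
             Ck_norm \<Omega> k R \<le> C' k * K * lam ^ k)"
proof -
  obtain w G R g where props: "smooth_closure \<Omega> w" "smooth_closure \<Omega> G" "\<forall>x\<in>closure \<Omega>. is_sym (G x)"
      "smooth_closure \<Omega> R" "\<forall>x\<in>closure \<Omega>. is_sym (R x)" "smooth_periodic g" "zero_mean g"
      "\<forall>x\<in>\<Omega>. \<gamma> (lam * (x \<bullet> axis i 1)) *\<^sub>R Q x =
         2 *\<^sub>R symm (grad w x) + (g (lam * (x \<bullet> axis i 1)) * (mu / lam) ^ j) *\<^sub>R G x + R x"
      "\<forall>x\<in>\<Omega>. R x \<in> offdiag_span"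
    and bounds: "deriv_bounded \<Omega> w (\<lambda>m. C m * K * lam ^ m * (1 / lam))"
      "deriv_bounded \<Omega> G (\<lambda>m. C m * K * mu ^ m * 1)" "deriv_bounded \<Omega> R (\<lambda>m. C m * K * lam ^ m * 1)"
    using decomposition unfolding oscillatory_decomposition_def by auto
  have "0 < lam" using assms(3,4) by linarith
  have "Ck_norm \<Omega> k w \<le> C' k * K * lam powr (real k - 1)" for k
  proof -
    have "Ck_norm \<Omega> k w \<le> C' k * (K * lam ^ k * (1 / lam))"
      using assms(2-6) \<open>0 < lam\<close> by (intro Ck_norm_le_power[OF _ bounds(1) _ _ _ _ C']) auto
    also have "\<dots> = C' k * K * lam powr (real k - 1)"
      using \<open>0 < lam\<close> by (simp add: powr_diff powr_realpow)
    finally show ?thesis .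
  qed
  moreover have "Ck_norm \<Omega> k G \<le> C' k * K * mu ^ k" "Ck_norm \<Omega> k R \<le> C' k * K * lam ^ k" for k
    using Ck_norm_le_power[OF _ bounds(2) _ _ _ _ C'] Ck_norm_le_power[OF _ bounds(3) _ _ _ _ C'] assms(2-6)
    by (simp_all add: mult.assoc)
  ultimately show ?thesis
    using props by blast
qed

theorem lemma2p5:
  fixes \<gamma> :: "real \<Rightarrow> real" and j :: nat
  assumes dim: "CARD('n::finite) \<ge> 2"
    and gam: "smooth_periodic \<gamma>" "zero_mean \<gamma>"
  shows "\<exists>C :: nat \<Rightarrow> real. \<forall>(\<Omega> :: (real^'n) set) (lam::real) (mu::real) (K::real) (Q :: real^'n \<Rightarrow> real^'n^'n) (i::'n).
     open \<Omega> \<and> connected \<Omega> \<and> bounded \<Omega> \<and> \<Omega> \<noteq> {} \<and>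
     lam \<ge> mu \<and> mu \<ge> 1 \<and> K \<ge> 0 \<and>
     smooth_closure \<Omega> Q \<and> (\<forall>x\<in>closure \<Omega>. is_sym (Q x)) \<and>
     (\<forall>k. Ck_norm \<Omega> k Q \<le> K * mu ^ k)
     \<longrightarrow>
     (\<exists>(w :: real^'n \<Rightarrow> real^'n) (G :: real^'n \<Rightarrow> real^'n^'n) (R :: real^'n \<Rightarrow> real^'n^'n) (gj :: real \<Rightarrow> real).
        smooth_closure \<Omega> w \<and>
        smooth_closure \<Omega> G \<and> (\<forall>x\<in>closure \<Omega>. is_sym (G x)) \<and>
        smooth_closure \<Omega> R \<and> (\<forall>x\<in>closure \<Omega>. is_sym (R x)) \<and>
        smooth_periodic gj \<and> zero_mean gj \<and>
        (\<forall>x\<in>\<Omega>. \<gamma> (lam * (x \<bullet> axis i 1)) *\<^sub>R Q x =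
            2 *\<^sub>R symm (grad w x) + (gj (lam * (x \<bullet> axis i 1)) * (mu / lam) ^ j) *\<^sub>R G x + R x) \<and>
        (\<forall>x\<in>\<Omega>. R x \<in> offdiag_span) \<and>
        (\<forall>k. Ck_norm \<Omega> k w \<le> C k * K * lam powr (real k - 1) \<and>
             Ck_norm \<Omega> k G \<le> C k * K * mu ^ k \<and>
             Ck_norm \<Omega> k R \<le> C k * K * lam ^ k))"
proof -
  have "\<exists>C. (\<forall>m. 0 \<le> C m) \<and> (\<forall>\<Omega> lam mu K (Q :: real^'n \<Rightarrow> real^'n^'n). open \<Omega> \<longrightarrow> 1 \<le> mu \<longrightarrow>
      mu \<le> lam \<longrightarrow> 0 \<le> K \<longrightarrow> smooth_closure \<Omega> Q \<longrightarrow> (\<forall>x\<in>closure \<Omega>. is_sym (Q x)) \<longrightarrow>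
      deriv_bounded \<Omega> Q (\<lambda>m. K * 1 * mu ^ m) \<longrightarrow> oscillatory_decomposition i \<gamma> j C \<Omega> lam mu K Q)" for i
    by (rule oscillatory_decomposition_exists[OF gam, where A = "\<lambda>_. 1" and i = i and j = j]) (simp, blast)
  then obtain C where C: "\<And>i. \<forall>m. 0 \<le> C i m" "\<And>i \<Omega> lam mu K (Q :: real^'n \<Rightarrow> real^'n^'n).
      open \<Omega> \<Longrightarrow> 1 \<le> mu \<Longrightarrow> mu \<le> lam \<Longrightarrow> 0 \<le> K \<Longrightarrow> smooth_closure \<Omega> Q \<Longrightarrow>
      \<forall>x\<in>closure \<Omega>. is_sym (Q x) \<Longrightarrow> deriv_bounded \<Omega> Q (\<lambda>m. K * 1 * mu ^ m) \<Longrightarrow>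
      oscillatory_decomposition i \<gamma> j (C i) \<Omega> lam mu K Q"
    by metis
  define C' where "C' k = (\<Sum>i\<in>UNIV. \<Sum>m\<le>k. real (card {\<beta>::'n multiset. size \<beta> = m}) * C i m)" for k
  have C': "(\<Sum>m\<le>k. real (card {\<beta>::'n multiset. size \<beta> = m}) * C i m) \<le> C' k" for i k
    unfolding C'_def using C(1) by (intro member_le_sum) (auto intro!: sum_nonneg)
  show ?thesis
    by (intro exI[of _ C'] allI impI, elim conjE, rule oscillatory_decomposition_Ck_bounds[OF C(2)])
      (auto intro!: deriv_bounded_of_Ck_norm simp: smooth_closure_iff C(1) C')
qed

end
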